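(* Let $F=F(N,\mathcal D)$ be a fragile connected GSC. Then $\chi(\Gamma_k)\ge|\mathcal D|^{k-1}-1$ for all $k\ge2$.
   Context: GSC: $N\ge2$, $\mathcal D\subset\{0,\dots,N-1\}^2$ with $1<|\mathcal D|<N^2$, $\varphi_i(x)=\frac1N(x+i)$, $F$ the attractor $F=\bigcup_{i\in\mathcal D}\varphi_i(F)$; $\varphi_{i_1\cdots i_k}=\varphi_{i_1}\circ\cdots\circ\varphi_{i_k}$. $\Gamma_k$: vertex set $\mathcal D^k$, edge between distinct $\mathbf i,\mathbf j$ iff $\varphi_{\mathbf i}(F)\cap\varphi_{\mathbf j}(F)\ne\varnothing$. $\chi(G)$: max over cut vertices $v$ of the number of vertices of the second largest component of $G-\{v\}$ (0 if none). $F$ is fragile if there is a partition $\mathcal D=\mathcal D_1\cup\mathcal D_2$ into disjoint nonempty sets with $\big(\bigcup_{i\in\mathcal D_1}\varphi_i(F)\big)\cap\big(\bigcup_{i\in\mathcal D_2}\varphi_i(F)\big)$ a singleton. *)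

theory Defs
  imports "HOL-Analysis.Analysis"
begin

definition gsc_map :: "nat \<Rightarrow> nat \<times> nat \<Rightarrow> real \<times> real \<Rightarrow> real \<times> real" where
  "gsc_map N i x = ((fst x + real (fst i)) / real N, (snd x + real (snd i)) / real N)"

definition gsc_word_map :: "nat \<Rightarrow> (nat \<times> nat) list \<Rightarrow> real \<times> real \<Rightarrow> real \<times> real" where
  "gsc_word_map N w = foldr (\<lambda>i f. gsc_map N i \<circ> f) w id"

definition gsc_params :: "nat \<Rightarrow> (nat \<times> nat) set \<Rightarrow> bool" where
  "gsc_params N D \<longleftrightarrow> N \<ge> 2 \<and> D \<subseteq> {0..<N} \<times> {0..<N} \<and> 1 < card D \<and> card D < N^2"

definition gsc_attractor :: "nat \<Rightarrow> (nat \<times> nat) set \<Rightarrow> (real \<times> real) set \<Rightarrow> bool" where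
  "gsc_attractor N D F \<longleftrightarrow> compact F \<and> F \<noteq> {} \<and> F = (\<Union>i\<in>D. gsc_map N i ` F)"

definition fragile :: "nat \<Rightarrow> (nat \<times> nat) set \<Rightarrow> (real \<times> real) set \<Rightarrow> bool" where
  "fragile N D F \<longleftrightarrow> (\<exists>D1 D2. D1 \<union> D2 = D \<and> D1 \<inter> D2 = {} \<and> D1 \<noteq> {} \<and> D2 \<noteq> {} \<and>
      (\<exists>p. (\<Union>i\<in>D1. gsc_map N i ` F) \<inter> (\<Union>i\<in>D2. gsc_map N i ` F) = {p}))"

definition graph_reach :: "'a set \<Rightarrow> ('a \<Rightarrow> 'a \<Rightarrow> bool) \<Rightarrow> 'a \<Rightarrow> 'a \<Rightarrow> bool" where
  "graph_reach V E x y \<longleftrightarrow> x \<in> V \<and> y \<in> V \<and> (\<lambda>a b. a \<in> V \<and> b \<in> V \<and> E a b)\<^sup>*\<^sup>* x y"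

definition graph_components :: "'a set \<Rightarrow> ('a \<Rightarrow> 'a \<Rightarrow> bool) \<Rightarrow> 'a set set" where
  "graph_components V E = {{y. graph_reach V E x y} | x. x \<in> V}"

definition cut_vertex :: "'a set \<Rightarrow> ('a \<Rightarrow> 'a \<Rightarrow> bool) \<Rightarrow> 'a \<Rightarrow> bool" where
  "cut_vertex V E v \<longleftrightarrow> v \<in> V \<and> card (graph_components V E) < card (graph_components (V - {v}) E)"

text \<open>Number of vertices of the second largest component (0 if fewer than two components).\<close>
definition second_largest_comp :: "'a set \<Rightarrow> ('a \<Rightarrow> 'a \<Rightarrow> bool) \<Rightarrow> nat" where
  "second_largest_comp V E = Max ({0} \<union> {min (card C1) (card C2) | C1 C2.
      C1 \<in> graph_components V E \<and> C2 \<in> graph_components V E \<and> C1 \<noteq> C2})"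

definition chi :: "'a set \<Rightarrow> ('a \<Rightarrow> 'a \<Rightarrow> bool) \<Rightarrow> nat" where
  "chi V E = Max ({0} \<union> {second_largest_comp (V - {v}) E | v. cut_vertex V E v})"

definition Gamma_vertices :: "(nat \<times> nat) set \<Rightarrow> nat \<Rightarrow> (nat \<times> nat) list set" where
  "Gamma_vertices D k = {w. length w = k \<and> set w \<subseteq> D}"

definition Gamma_edge :: "nat \<Rightarrow> (real \<times> real) set \<Rightarrow> (nat \<times> nat) list \<Rightarrow> (nat \<times> nat) list \<Rightarrow> bool" where
  "Gamma_edge N F w u \<longleftrightarrow> w \<noteq> u \<and> gsc_word_map N w ` F \<inter> gsc_word_map N u ` F \<noteq> {}"

end

theory Submission
  imports Defs
begin

text \<open>Let the pieces of side \<open>X\<close> and those of side \<open>Y\<close> meet only in \<open>p\<close>. Two words of length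
  \<open>k\<close> with first letters on different sides are adjacent in \<open>\<Gamma>\<^sub>k\<close> only if both cells contain \<open>p\<close>.
  Not both sides can have two cells through \<open>p\<close>: the four preimages of \<open>p\<close> would be the four
  corners of the unit square, all in \<open>F\<close>, and some cell of side \<open>X\<close> and some cell of side \<open>Y\<close> would
  share a whole edge. So on one side, say \<open>X\<close>, a single word \<open>v\<close> has \<open>p\<close> in its cell, and deleting
  \<open>v\<close> disconnects \<open>\<Gamma>\<^sub>k\<close>: side \<open>Y\<close> contains a full block \<open>y D\<^sup>k\<^sup>-\<^sup>1\<close>, and side \<open>X\<close> contains another
  full block if \<open>|X| \<ge> 2\<close>, and otherwise the block \<open>a D\<^sup>k\<^sup>-\<^sup>1\<close> minus \<open>v\<close>. In that last case
  \<open>p = \<phi>\<^sub>a(q)\<close> for a corner \<open>q\<close> of the unit square and \<open>v = a c\<^sup>k\<^sup>-\<^sup>1\<close> for the digit \<open>c\<close> of the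
  corner piece at \<open>q\<close>; the block minus \<open>v\<close> is connected because the pieces other than the corner piece
  have connected union: the pieces meeting the corner piece meet each other, so removing the
  corner piece from the intersection graph of the pieces keeps it connected.\<close>

section \<open>Reachability in simple graphs\<close>

definition graph_connected :: "'a set \<Rightarrow> ('a \<Rightarrow> 'a \<Rightarrow> bool) \<Rightarrow> bool" where
  "graph_connected V E \<longleftrightarrow> (\<forall>x\<in>V. \<forall>y\<in>V. graph_reach V E x y)"

lemma graph_reach_refl: "x \<in> V \<Longrightarrow> graph_reach V E x x"
  by (simp add: graph_reach_def)

lemma graph_reach_in: "graph_reach V E x y \<Longrightarrow> x \<in> V \<and> y \<in> V"
  by (simp add: graph_reach_def)

lemma graph_reach_trans: "graph_reach V E x y \<Longrightarrow> graph_reach V E y z \<Longrightarrow> graph_reach V E x z"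
  unfolding graph_reach_def by (meson rtranclp_trans)

lemma graph_reach_edge: "x \<in> V \<Longrightarrow> y \<in> V \<Longrightarrow> E x y \<Longrightarrow> graph_reach V E x y"
  unfolding graph_reach_def by (simp add: r_into_rtranclp)

lemma graph_reach_mono:
  assumes "W \<subseteq> V" "graph_reach W E x y"
  shows "graph_reach V E x y"
proof -
  have "(\<lambda>a b. a \<in> W \<and> b \<in> W \<and> E a b)\<^sup>*\<^sup>* x y"
    using assms(2) by (simp add: graph_reach_def)
  then have "(\<lambda>a b. a \<in> V \<and> b \<in> V \<and> E a b)\<^sup>*\<^sup>* x y"
    by (rule rtranclp_mono[THEN predicate2D, rotated]) (use assms(1) in auto)
  then show ?thesis
    using assms by (auto simp: graph_reach_def)
qed

lemma graph_reach_closed_set: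
  assumes "graph_reach V E x y" "x \<in> S"
    and "\<And>a b. a \<in> S \<Longrightarrow> a \<in> V \<Longrightarrow> b \<in> V \<Longrightarrow> E a b \<Longrightarrow> b \<in> S"
  shows "y \<in> S"
proof -
  have "(\<lambda>a b. a \<in> V \<and> b \<in> V \<and> E a b)\<^sup>*\<^sup>* x y"
    using assms(1) by (simp add: graph_reach_def)
  then show ?thesis
  proof (induction rule: rtranclp_induct)
    case base
    then show ?case using assms(2) .
  next
    case (step y z)
    then show ?case using assms(3) by blast
  qed
qed

lemma graph_components_connected:
  assumes "V \<noteq> {}" "graph_connected V E"
  shows "graph_components V E = {V}"
proof -
  have "{y. graph_reach V E x y} = V" if "x \<in> V" for x
    using assms(2) that graph_reach_in[of V E x] unfolding graph_connected_def by blast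
  then show ?thesis
    using assms(1) unfolding graph_components_def by auto
qed

lemma finite_graph_components:
  assumes "finite V"
  shows "finite (graph_components V E)"
proof -
  have "graph_components V E \<subseteq> Pow V"
    unfolding graph_components_def using graph_reach_in by fastforce
  then show ?thesis
    using assms finite_subset by blast
qed

lemma second_largest_comp_ge:
  assumes "finite V" "C1 \<in> graph_components V E" "C2 \<in> graph_components V E" "C1 \<noteq> C2"
  shows "min (card C1) (card C2) \<le> second_largest_comp V E"
proof -
  let ?C = "graph_components V E"
  have "{min (card C1) (card C2) | C1 C2. C1 \<in> ?C \<and> C2 \<in> ?C \<and> C1 \<noteq> C2}
      \<subseteq> (\<lambda>(A, B). min (card A) (card B)) ` (?C \<times> ?C)"
    by fastforce
  moreover have "finite ?C"
    using finite_graph_components[OF assms(1)] .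
  ultimately have "finite {min (card C1) (card C2) | C1 C2. C1 \<in> ?C \<and> C2 \<in> ?C \<and> C1 \<noteq> C2}"
    by (meson finite_SigmaI finite_imageI finite_subset)
  then show ?thesis
    unfolding second_largest_comp_def using assms(2-4) by (intro Max_ge) auto
qed

lemma chi_ge:
  assumes "finite V" "cut_vertex V E v"
  shows "second_largest_comp (V - {v}) E \<le> chi V E"
proof -
  have "{second_largest_comp (V - {v}) E | v. cut_vertex V E v}
      \<subseteq> (\<lambda>v. second_largest_comp (V - {v}) E) ` V"
    unfolding cut_vertex_def by blast
  then have "finite {second_largest_comp (V - {v}) E | v. cut_vertex V E v}"
    using assms(1) by (meson finite_imageI finite_subset)
  then show ?thesis
    unfolding chi_def using assms(2) by (intro Max_ge) auto
qed

lemma chi_ge_separated: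
  assumes fin: "finite V" and conn: "graph_connected V E" and v: "v \<in> V"
    and W: "W1 \<subseteq> V - {v}" "W2 \<subseteq> V - {v}" "graph_connected W1 E" "graph_connected W2 E"
    and x: "x1 \<in> W1" "x2 \<in> W2" and sep: "\<not> graph_reach (V - {v}) E x1 x2"
  shows "min (card W1) (card W2) \<le> chi V E"
proof -
  define C1 where "C1 = {y. graph_reach (V - {v}) E x1 y}"
  define C2 where "C2 = {y. graph_reach (V - {v}) E x2 y}"
  have C: "C1 \<in> graph_components (V - {v}) E" "C2 \<in> graph_components (V - {v}) E"
    unfolding C1_def C2_def graph_components_def using x W(1,2) by blast+
  have "x2 \<in> C2" "x2 \<notin> C1"
    unfolding C1_def C2_def using x W(2) sep by (auto intro: graph_reach_refl)
  then have C12: "C1 \<noteq> C2" by blast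
  have fin': "finite (graph_components (V - {v}) E)"
    using fin by (intro finite_graph_components) simp
  have "card {C1, C2} \<le> card (graph_components (V - {v}) E)"
    using C fin' by (intro card_mono) auto
  moreover have "graph_components V E = {V}"
    using graph_components_connected[OF _ conn] v by blast
  ultimately have cut: "cut_vertex V E v"
    unfolding cut_vertex_def using v C12 by simp
  have "C1 \<subseteq> V" "C2 \<subseteq> V"
    unfolding C1_def C2_def by (auto dest: graph_reach_in)
  then have fin_C: "finite C1" "finite C2"
    using fin by (auto intro: finite_subset)
  have "W1 \<subseteq> C1"
  proof
    fix y assume "y \<in> W1"
    then have "graph_reach W1 E x1 y" using W(3) x(1) unfolding graph_connected_def by blast
    then show "y \<in> C1" unfolding C1_def using graph_reach_mono[OF W(1)] by blast
  qed
  moreover have "W2 \<subseteq> C2"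
  proof
    fix y assume "y \<in> W2"
    then have "graph_reach W2 E x2 y" using W(4) x(2) unfolding graph_connected_def by blast
    then show "y \<in> C2" unfolding C2_def using graph_reach_mono[OF W(2)] by blast
  qed
  ultimately have "min (card W1) (card W2) \<le> min (card C1) (card C2)"
    using fin_C by (simp add: card_mono min.coboundedI1 min.coboundedI2)
  also have "\<dots> \<le> second_largest_comp (V - {v}) E"
    using fin C C12 by (intro second_largest_comp_ge) auto
  also have "\<dots> \<le> chi V E"
    using chi_ge[OF fin cut] .
  finally show ?thesis .
qed

text \<open>A path through \<open>v\<close> can be rerouted around \<open>v\<close> when the neighbours of \<open>v\<close> form a clique.\<close>

lemma graph_connected_Diff_clique:
  assumes conn: "graph_connected V E" and v: "v \<in> V"
    and clique: "\<And>a b. a \<in> V - {v} \<Longrightarrow> b \<in> V - {v} \<Longrightarrow> a \<noteq> b \<Longrightarrow> E a v \<Longrightarrow> E v b \<Longrightarrow> E a b"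
  shows "graph_connected (V - {v}) E"
  unfolding graph_connected_def
proof (intro ballI)
  fix x y assume x: "x \<in> V - {v}" and y: "y \<in> V - {v}"
  let ?R = "graph_reach (V - {v}) E x"
  define S where "S = {z. (z \<noteq> v \<longrightarrow> ?R z) \<and> (z = v \<longrightarrow> (\<exists>u\<in>V - {v}. E u v \<and> ?R u))}"
  have "y \<in> S"
  proof (rule graph_reach_closed_set)
    show "graph_reach V E x y" using conn x y unfolding graph_connected_def by blast
    show "x \<in> S" using x unfolding S_def by (auto intro: graph_reach_refl)
  next
    fix a b assume a: "a \<in> S" "a \<in> V" and b: "b \<in> V" and ab: "E a b"
    show "b \<in> S"
    proof (cases "a = v")
      case False
      then have "?R a" using a unfolding S_def by blast
      then show ?thesis
        using False a b ab unfolding S_def by (auto intro: graph_reach_trans graph_reach_edge)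
    next
      case True
      then obtain u where u: "u \<in> V - {v}" "E u v" "?R u" using a unfolding S_def by blast
      have "?R b" if "b \<noteq> v"
      proof (cases "u = b")
        case False
        then have "E u b" using clique[OF u(1) _ False u(2)] b ab True that by blast
        then show ?thesis using u b that by (blast intro: graph_reach_trans graph_reach_edge)
      qed (use u in simp)
      then show ?thesis using u unfolding S_def by blast
    qed
  qed
  then show "?R y" using y unfolding S_def by blast
qed

section \<open>Intersection graphs of families of sets\<close>

lemma graph_connected_of_connected_UN:
  assumes fin: "finite I" and closed: "\<And>i. i \<in> I \<Longrightarrow> closed (P i)" and ne: "\<And>i. i \<in> I \<Longrightarrow> P i \<noteq> {}"
    and edge: "\<And>i j. i \<in> I \<Longrightarrow> j \<in> I \<Longrightarrow> i \<noteq> j \<Longrightarrow> P i \<inter> P j \<noteq> {} \<Longrightarrow> E i j"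
    and conn: "connected (\<Union>i\<in>I. P i)"
  shows "graph_connected I E"
  unfolding graph_connected_def
proof (intro ballI, rule ccontr)
  fix x y assume x: "x \<in> I" and y: "y \<in> I" and nr: "\<not> graph_reach I E x y"
  define R where "R = {z \<in> I. graph_reach I E x z}"
  define U1 where "U1 = (\<Union>i\<in>R. P i)"
  define U2 where "U2 = (\<Union>i\<in>I - R. P i)"
  have "closed U1" "closed U2"
    unfolding U1_def U2_def R_def using fin closed by (auto intro!: closed_UN)
  moreover have "(\<Union>i\<in>I. P i) \<subseteq> U1 \<union> U2"
    unfolding U1_def U2_def by blast
  moreover have "U1 \<inter> U2 = {}"
  proof (rule ccontr)
    assume "U1 \<inter> U2 \<noteq> {}"
    then obtain r s where r: "r \<in> R" and s: "s \<in> I - R" and "P r \<inter> P s \<noteq> {}"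
      unfolding U1_def U2_def by blast
    then have "graph_reach I E r s"
      using edge by (intro graph_reach_edge) (auto simp: R_def)
    then show False
      using r s unfolding R_def by (blast intro: graph_reach_trans)
  qed
  moreover have "x \<in> R" "y \<in> I - R"
    unfolding R_def using x y nr by (auto intro: graph_reach_refl)
  then have "U1 \<inter> (\<Union>i\<in>I. P i) \<noteq> {}" "U2 \<inter> (\<Union>i\<in>I. P i) \<noteq> {}"
    using ne[OF x] ne[OF y] x y unfolding U1_def U2_def by blast+
  ultimately show False
    using conn unfolding connected_closed by blast
qed

lemma connected_UN_of_graph_connected:
  assumes conn: "graph_connected I E" and P: "\<And>i. i \<in> I \<Longrightarrow> connected (P i)"
    and edge: "\<And>i j. i \<in> I \<Longrightarrow> j \<in> I \<Longrightarrow> E i j \<Longrightarrow> P i \<inter> P j \<noteq> {}"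
  shows "connected (\<Union>i\<in>I. P i)"
proof (rule connectedI_const)
  fix f :: "'b \<Rightarrow> bool" assume f: "continuous_on (\<Union>i\<in>I. P i) f"
  have const: "\<exists>c. \<forall>s\<in>P i. f s = c" if "i \<in> I" for i
    using connectedD_const[OF P[OF that] continuous_on_subset[OF f]] that by blast
  show "\<exists>c. \<forall>s\<in>\<Union>i\<in>I. P i. f s = c"
  proof (cases "(\<Union>i\<in>I. P i) = {}")
    case False
    then obtain i0 s0 where i0: "i0 \<in> I" "s0 \<in> P i0" by blast
    have "j \<in> {j. \<forall>s\<in>P j. f s = f s0}" if "j \<in> I" for j
    proof (rule graph_reach_closed_set)
      show "graph_reach I E i0 j" using conn i0(1) that unfolding graph_connected_def by blast
      show "i0 \<in> {j. \<forall>s\<in>P j. f s = f s0}" using const[OF i0(1)] i0(2) by auto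
    next
      fix a b assume "a \<in> {j. \<forall>s\<in>P j. f s = f s0}" "a \<in> I" "b \<in> I" "E a b"
      then show "b \<in> {j. \<forall>s\<in>P j. f s = f s0}"
        using edge[of a b] const[of b] by force
    qed
    then show ?thesis by blast
  qed simp
qed

section \<open>Words, word maps and cells\<close>

lemma gsc_word_map_Nil [simp]: "gsc_word_map N [] = id"
  by (simp add: gsc_word_map_def)

lemma gsc_word_map_Cons: "gsc_word_map N (i # w) = gsc_map N i \<circ> gsc_word_map N w"
  by (simp add: gsc_word_map_def)

text \<open>The word map of \<open>w\<close> is \<open>x \<mapsto> (x + word_offset N w) / N ^ length w\<close>: its image of the unit
  square is the square of the grid of mesh \<open>N ^ - length w\<close> at position \<open>word_offset N w\<close>.\<close>

fun word_offset :: "nat \<Rightarrow> (nat \<times> nat) list \<Rightarrow> nat \<times> nat" where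
  "word_offset N [] = (0, 0)"
| "word_offset N (i # w) =
     (fst i * N ^ length w + fst (word_offset N w), snd i * N ^ length w + snd (word_offset N w))"

lemma gsc_word_map_eq:
  assumes "N > 0"
  shows "gsc_word_map N w x =
    ((fst x + real (fst (word_offset N w))) / real N ^ length w,
     (snd x + real (snd (word_offset N w))) / real N ^ length w)"
  by (induction w) (use assms in \<open>simp_all add: gsc_word_map_Cons gsc_map_def field_simps\<close>)

lemma gsc_word_map_diff:
  assumes "N > 0"
  shows "fst (gsc_word_map N w x) - fst (gsc_word_map N w x') = (fst x - fst x') / real N ^ length w"
    and "snd (gsc_word_map N w x) - snd (gsc_word_map N w x') = (snd x - snd x') / real N ^ length w"
  unfolding gsc_word_map_eq[OF assms] by (simp_all add: diff_divide_distrib[symmetric])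

definition gsc_word_map_inv :: "nat \<Rightarrow> (nat \<times> nat) list \<Rightarrow> real \<times> real \<Rightarrow> real \<times> real" where
  "gsc_word_map_inv N w z =
    (real N ^ length w * fst z - real (fst (word_offset N w)), real N ^ length w * snd z - real (snd (word_offset N w)))"

lemma gsc_word_map_inv_eq:
  assumes "N > 0" "gsc_word_map N w x = z"
  shows "gsc_word_map_inv N w z = x"
proof -
  have "real N ^ length w > 0" using assms(1) by simp
  then show ?thesis
    using assms unfolding gsc_word_map_eq[OF assms(1)] gsc_word_map_inv_def by (auto simp: prod_eq_iff field_simps)
qed

lemma gsc_word_map_inv [simp]:
  assumes "N > 0"
  shows "gsc_word_map N w (gsc_word_map_inv N w z) = z"
  using assms unfolding gsc_word_map_eq[OF assms] gsc_word_map_inv_def by (simp add: prod_eq_iff)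

lemma gsc_word_map_shift:
  assumes "N > 0" "length v = length w"
    and "fst t' - fst t = fst (gsc_word_map_inv N w z) - fst (gsc_word_map_inv N v z)"
    and "snd t' - snd t = snd (gsc_word_map_inv N w z) - snd (gsc_word_map_inv N v z)"
  shows "gsc_word_map N v t = gsc_word_map N w t'"
proof -
  have "real N ^ length w > 0" using assms(1) by simp
  then show ?thesis
    using assms(2-4) unfolding gsc_word_map_eq[OF assms(1)] gsc_word_map_inv_def
    by (simp add: prod_eq_iff field_simps)
qed

lemma word_offset_less:
  assumes "set w \<subseteq> {0..<N} \<times> {0..<N}"
  shows "fst (word_offset N w) < N ^ length w \<and> snd (word_offset N w) < N ^ length w"
  using assms
proof (induction w)
  case Nil
  then show ?case by simp
next
  case (Cons i w)
  have "c * N ^ length w + r < N ^ Suc (length w)" if "c < N" "r < N ^ length w" for c r :: nat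
  proof -
    have "c * N ^ length w + r < (c + 1) * N ^ length w" using that by simp
    also have "\<dots> \<le> N * N ^ length w" using that by (intro mult_right_mono) auto
    finally show ?thesis by simp
  qed
  then show ?case using Cons by auto
qed

lemma word_offset_inj:
  assumes "length w = length w'" "set w \<subseteq> {0..<N} \<times> {0..<N}" "set w' \<subseteq> {0..<N} \<times> {0..<N}"
    and "word_offset N w = word_offset N w'"
  shows "w = w'"
  using assms
proof (induction w arbitrary: w')
  case Nil
  then show ?case by simp
next
  case (Cons i w)
  obtain j u where w': "w' = j # u" "length u = length w"
    using Cons.prems(1) by (cases w') auto
  have less: "fst (word_offset N w) < N ^ length w" "snd (word_offset N w) < N ^ length w"
    "fst (word_offset N u) < N ^ length w" "snd (word_offset N u) < N ^ length w"
    using word_offset_less[of w N] word_offset_less[of u N] Cons.prems(2,3) w' by auto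
  have digits: "a = c \<and> b = d" if "b < M" "d < M" "a * M + b = c * M + d" for a b c d M :: nat
  proof -
    have "(a * M + b) div M = a" "(a * M + b) mod M = b" "(c * M + d) div M = c" "(c * M + d) mod M = d"
      using that(1,2) by simp_all
    then show ?thesis using that(3) by metis
  qed
  have "fst i * N ^ length w + fst (word_offset N w) = fst j * N ^ length w + fst (word_offset N u)"
    "snd i * N ^ length w + snd (word_offset N w) = snd j * N ^ length w + snd (word_offset N u)"
    using Cons.prems(4) w' by simp_all
  then have "fst i = fst j \<and> fst (word_offset N w) = fst (word_offset N u)"
    "snd i = snd j \<and> snd (word_offset N w) = snd (word_offset N u)"
    using digits less by blast+
  then have "i = j" "word_offset N w = word_offset N u"
    by (simp_all add: prod_eq_iff)
  then show ?case
    using Cons.IH[of u] Cons.prems(2,3) w' by simp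
qed

lemma continuous_on_gsc_map: "continuous_on S (gsc_map N i)"
  unfolding gsc_map_def divide_inverse by (intro continuous_intros)

lemma continuous_on_gsc_word_map: "continuous_on S (gsc_word_map N w)"
proof (induction w)
  case (Cons i w)
  then show ?case
    unfolding gsc_word_map_Cons
    by (intro continuous_on_compose continuous_on_gsc_map) (rule continuous_on_subset, auto)
qed simp

definition cell :: "nat \<Rightarrow> (real \<times> real) set \<Rightarrow> (nat \<times> nat) list \<Rightarrow> (real \<times> real) set" where
  "cell N F w = gsc_word_map N w ` F"

lemma cell_Nil [simp]: "cell N F [] = F"
  by (simp add: cell_def)

lemma cell_Cons: "cell N F (i # w) = gsc_map N i ` cell N F w"
  by (simp add: cell_def gsc_word_map_Cons image_comp)

lemma Gamma_vertices_0: "Gamma_vertices D 0 = {[]}"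
  by (auto simp: Gamma_vertices_def)

lemma Cons_in_Gamma_vertices [simp]:
  "i # w \<in> Gamma_vertices D (Suc m) \<longleftrightarrow> i \<in> D \<and> w \<in> Gamma_vertices D m"
  by (auto simp: Gamma_vertices_def)

lemma Gamma_vertices_SucE:
  assumes "w \<in> Gamma_vertices D (Suc m)"
  obtains i u where "w = i # u" "i \<in> D" "u \<in> Gamma_vertices D m"
  using assms by (cases w) (auto simp: Gamma_vertices_def)

lemma finite_Gamma_vertices: "finite D \<Longrightarrow> finite (Gamma_vertices D m)"
  using finite_lists_length_eq[of D m] by (simp add: Gamma_vertices_def conj_commute)

lemma card_Gamma_vertices: "finite D \<Longrightarrow> card (Gamma_vertices D m) = card D ^ m"
  using card_lists_length_eq[of D m] by (simp add: Gamma_vertices_def conj_commute)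

lemma Gamma_vertices_nonempty: "D \<noteq> {} \<Longrightarrow> Gamma_vertices D m \<noteq> {}"
proof -
  assume "D \<noteq> {}"
  then obtain d where "d \<in> D" by blast
  then have "replicate m d \<in> Gamma_vertices D m" by (auto simp: Gamma_vertices_def)
  then show ?thesis by blast
qed

lemma card_block: "card ((#) i ` Gamma_vertices D m) = card (Gamma_vertices D m)"
  by (simp add: card_image)

section \<open>Connected generalized Sierpinski carpets\<close>

lemma self_similar_bounds:
  fixes g :: "'a \<Rightarrow> real" and r :: real
  assumes "compact (g ` F)" "F \<noteq> {}" "r > 1"
    and self_sim: "\<And>z. z \<in> F \<Longrightarrow> \<exists>y\<in>F. \<exists>c. lo \<le> c \<and> c \<le> hi \<and> g z = (g y + c) / r"
    and "z \<in> F"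
  shows "lo / (r - 1) \<le> g z \<and> g z \<le> hi / (r - 1)"
proof -
  obtain zmax where zmax: "zmax \<in> F" "\<And>t. t \<in> F \<Longrightarrow> g t \<le> g zmax"
    using compact_attains_sup[OF assms(1)] assms(2) by auto
  obtain zmin where zmin: "zmin \<in> F" "\<And>t. t \<in> F \<Longrightarrow> g zmin \<le> g t"
    using compact_attains_inf[OF assms(1)] assms(2) by auto
  obtain y c where "y \<in> F" "c \<le> hi" "g zmax * r = g y + c"
    using self_sim[OF zmax(1)] assms(3) by (auto simp: field_simps)
  then have "g zmax * (r - 1) \<le> hi"
    using zmax(2)[of y] by (simp add: algebra_simps)
  then have max: "g zmax \<le> hi / (r - 1)"
    using assms(3) by (simp add: field_simps)
  obtain y' c' where "y' \<in> F" "lo \<le> c'" "g zmin * r = g y' + c'"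
    using self_sim[OF zmin(1)] assms(3) by (auto simp: field_simps)
  then have "lo \<le> g zmin * (r - 1)"
    using zmin(2)[of y'] by (simp add: algebra_simps)
  then have min: "lo / (r - 1) \<le> g zmin"
    using assms(3) by (simp add: field_simps)
  show ?thesis
    using max min zmax(2) zmin(2) assms(5) by (meson order_trans)
qed

locale connected_gsc =
  fixes N :: nat and D :: "(nat \<times> nat) set" and F :: "(real \<times> real) set"
  assumes params: "gsc_params N D" and attractor: "gsc_attractor N D F" and connected_F: "connected F"
begin

lemma N_ge_2: "N \<ge> 2"
  using params by (simp add: gsc_params_def)

lemma N_pos: "real N > 0"
  using N_ge_2 by simp

lemma D_grid: "D \<subseteq> {0..<N} \<times> {0..<N}"
  using params by (simp add: gsc_params_def)

lemma digit_less: "i \<in> D \<Longrightarrow> fst i < N \<and> snd i < N"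
  using D_grid by auto

lemma word_grid: "w \<in> Gamma_vertices D m \<Longrightarrow> set w \<subseteq> {0..<N} \<times> {0..<N}"
  using D_grid by (auto simp: Gamma_vertices_def)

lemma finite_D: "finite D"
  using D_grid finite_subset by blast

lemma card_D_ge_2: "card D \<ge> 2"
  using params by (simp add: gsc_params_def)

lemma D_nonempty: "D \<noteq> {}"
  using card_D_ge_2 by auto

lemma compact_F: "compact F"
  using attractor by (simp add: gsc_attractor_def)

lemma F_nonempty: "F \<noteq> {}"
  using attractor by (simp add: gsc_attractor_def)

lemma F_self_similar: "F = (\<Union>i\<in>D. gsc_map N i ` F)"
  using attractor by (simp add: gsc_attractor_def)

lemma fst_bounds:
  assumes "\<forall>d\<in>D. lo \<le> real (fst d) \<and> real (fst d) \<le> hi" "z \<in> F"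
  shows "lo / (real N - 1) \<le> fst z \<and> fst z \<le> hi / (real N - 1)"
proof (rule self_similar_bounds[OF _ F_nonempty _ _ assms(2)])
  show "compact (fst ` F)" by (intro compact_continuous_image continuous_intros compact_F)
  show "real N > 1" using N_ge_2 by simp
  fix z assume "z \<in> F"
  then obtain y i where "y \<in> F" "i \<in> D" "z = gsc_map N i y" using F_self_similar by blast
  then show "\<exists>y\<in>F. \<exists>c. lo \<le> c \<and> c \<le> hi \<and> fst z = (fst y + c) / real N"
    using assms(1) by (auto simp: gsc_map_def)
qed

lemma snd_bounds:
  assumes "\<forall>d\<in>D. lo \<le> real (snd d) \<and> real (snd d) \<le> hi" "z \<in> F"
  shows "lo / (real N - 1) \<le> snd z \<and> snd z \<le> hi / (real N - 1)"
proof (rule self_similar_bounds[OF _ F_nonempty _ _ assms(2)])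
  show "compact (snd ` F)" by (intro compact_continuous_image continuous_intros compact_F)
  show "real N > 1" using N_ge_2 by simp
  fix z assume "z \<in> F"
  then obtain y i where "y \<in> F" "i \<in> D" "z = gsc_map N i y" using F_self_similar by blast
  then show "\<exists>y\<in>F. \<exists>c. lo \<le> c \<and> c \<le> hi \<and> snd z = (snd y + c) / real N"
    using assms(1) by (auto simp: gsc_map_def)
qed

lemma F_unit_square:
  assumes "z \<in> F"
  shows "0 \<le> fst z \<and> fst z \<le> 1 \<and> 0 \<le> snd z \<and> snd z \<le> 1"
proof -
  have le: "real a \<le> real N - 1" if "a < N" for a
  proof -
    have "a + 1 \<le> N" using that by simp
    then have "real a + 1 \<le> real N" by (metis of_nat_1 of_nat_add of_nat_le_iff)
    then show ?thesis by simp
  qed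
  have "\<forall>d\<in>D. 0 \<le> real (fst d) \<and> real (fst d) \<le> real N - 1"
    "\<forall>d\<in>D. 0 \<le> real (snd d) \<and> real (snd d) \<le> real N - 1"
    using digit_less le by fastforce+
  then show ?thesis
    using fst_bounds[of 0 "real N - 1" z] snd_bounds[of 0 "real N - 1" z] assms N_ge_2 by simp
qed

lemma connected_F_cover_meet:
  assumes "F = A \<union> B" "closed A" "closed B" "A \<noteq> {}" "B \<noteq> {}"
  shows "A \<inter> B \<noteq> {}"
proof -
  have "\<not> (closed A \<and> closed B \<and> F \<subseteq> A \<union> B \<and> A \<inter> B \<inter> F = {} \<and> A \<inter> F \<noteq> {} \<and> B \<inter> F \<noteq> {})"
    using connected_F unfolding connected_closed by blast
  then show ?thesis
    using assms by blast
qed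

lemma gsc_map_subset: "i \<in> D \<Longrightarrow> gsc_map N i ` F \<subseteq> F"
  using F_self_similar by blast

lemma cell_subset: "set w \<subseteq> D \<Longrightarrow> cell N F w \<subseteq> F"
proof (induction w)
  case (Cons i w)
  then have "cell N F (i # w) \<subseteq> gsc_map N i ` F" by (auto simp: cell_Cons)
  also have "\<dots> \<subseteq> F" using Cons.prems gsc_map_subset by simp
  finally show ?case .
qed simp

lemma cell_Cons_subset: "set w \<subseteq> D \<Longrightarrow> cell N F (i # w) \<subseteq> gsc_map N i ` F"
  using cell_subset by (auto simp: cell_Cons)

lemma F_eq_cells: "F = (\<Union>w\<in>Gamma_vertices D m. cell N F w)"
proof (induction m)
  case 0
  then show ?case by (simp add: Gamma_vertices_0)
next
  case (Suc m)
  have "(\<Union>w\<in>Gamma_vertices D (Suc m). cell N F w) = (\<Union>i\<in>D. \<Union>w\<in>Gamma_vertices D m. cell N F (i # w))"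
    by (auto elim!: Gamma_vertices_SucE intro: UN_I[of "_ # _"])
  also have "\<dots> = (\<Union>i\<in>D. gsc_map N i ` (\<Union>w\<in>Gamma_vertices D m. cell N F w))"
    by (simp add: cell_Cons image_UN)
  also have "\<dots> = (\<Union>i\<in>D. gsc_map N i ` F)"
    by (simp only: flip: Suc)
  finally show ?case
    using F_self_similar by simp
qed

lemma cells_of_block: "(\<Union>w\<in>(#) i ` Gamma_vertices D m. cell N F w) = gsc_map N i ` F"
  by (subst (2) F_eq_cells[of m]) (simp add: cell_Cons image_UN)

lemma compact_gsc_map_image: "compact (gsc_map N i ` F)"
  by (intro compact_continuous_image continuous_on_gsc_map compact_F)

lemma closed_gsc_map_image: "closed (gsc_map N i ` F)"
  by (intro compact_imp_closed compact_gsc_map_image)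

lemma connected_gsc_map_image: "connected (gsc_map N i ` F)"
  by (intro connected_continuous_image continuous_on_gsc_map connected_F)

lemma closed_cell: "closed (cell N F w)"
  unfolding cell_def by (intro compact_imp_closed compact_continuous_image continuous_on_gsc_word_map compact_F)

lemma cell_nonempty: "cell N F w \<noteq> {}"
  using F_nonempty by (simp add: cell_def)

lemma graph_connected_of_connected_cells:
  assumes "finite W" "connected (\<Union>w\<in>W. cell N F w)"
  shows "graph_connected W (Gamma_edge N F)"
  using assms closed_cell cell_nonempty
  by (intro graph_connected_of_connected_UN) (auto simp: Gamma_edge_def cell_def)

lemma graph_connected_Gamma: "graph_connected (Gamma_vertices D k) (Gamma_edge N F)"
  by (rule graph_connected_of_connected_cells) (simp_all add: finite_Gamma_vertices[OF finite_D]
      flip: F_eq_cells, rule connected_F)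

lemma graph_connected_block: "graph_connected ((#) i ` Gamma_vertices D m) (Gamma_edge N F)"
  by (rule graph_connected_of_connected_cells)
    (simp add: finite_Gamma_vertices[OF finite_D], unfold cells_of_block, rule connected_gsc_map_image)

lemma card_block_D: "card ((#) i ` Gamma_vertices D m) = card D ^ m"
  by (simp add: card_block card_Gamma_vertices[OF finite_D])

end

definition unit_corners :: "(real \<times> real) set" where
  "unit_corners = {0, 1} \<times> {0, 1}"

definition axis_neighbours :: "real \<times> real \<Rightarrow> real \<times> real \<Rightarrow> bool" where
  "axis_neighbours a b \<longleftrightarrow> (fst a \<noteq> fst b \<and> snd a = snd b) \<or> (fst a = fst b \<and> snd a \<noteq> snd b)"

lemma unit_corners_eq: "unit_corners = {(0, 0), (0, 1), (1, 0), (1, 1)}"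
  unfolding unit_corners_def by auto

lemma unit_cornersD: "q \<in> unit_corners \<Longrightarrow> (fst q = 0 \<or> fst q = 1) \<and> (snd q = 0 \<or> snd q = 1)"
  unfolding unit_corners_def by auto

lemma unit_corners_flip:
  assumes "q \<in> unit_corners"
  shows "(1 - fst q, 1 - snd q) \<in> unit_corners" "(1 - fst q, snd q) \<in> unit_corners"
    "(fst q, 1 - snd q) \<in> unit_corners"
  using unit_cornersD[OF assms] unfolding unit_corners_def by auto

lemma unit_corners_other:
  assumes "q \<in> unit_corners" "z \<in> unit_corners" "z \<noteq> q"
  shows "z = (1 - fst q, 1 - snd q) \<or> z = (1 - fst q, snd q) \<or> z = (fst q, 1 - snd q)"
  using assms unfolding unit_corners_eq by auto

lemma axis_neighbours_sym: "axis_neighbours a b \<Longrightarrow> axis_neighbours b a"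
  unfolding axis_neighbours_def by auto

lemma axis_neighbours_of_two_corners:
  assumes "z1 \<in> unit_corners" "z2 \<in> unit_corners" "z3 \<in> unit_corners"
    and "z1 \<noteq> z2" "z3 \<noteq> z1" "z3 \<noteq> z2"
  shows "axis_neighbours z3 z1 \<or> axis_neighbours z3 z2"
proof (rule ccontr)
  assume "\<not> ?thesis"
  then have "fst z1 \<noteq> fst z3" "snd z1 \<noteq> snd z3" "fst z2 \<noteq> fst z3" "snd z2 \<noteq> snd z3"
    using assms(5,6) unfolding axis_neighbours_def by (auto simp: prod_eq_iff)
  moreover have "\<And>a b c :: real. a \<in> {0, 1} \<Longrightarrow> b \<in> {0, 1} \<Longrightarrow> c \<in> {0, 1} \<Longrightarrow> a \<noteq> c \<Longrightarrow> b \<noteq> c \<Longrightarrow> a = b"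
    by auto
  ultimately have "fst z1 = fst z2" "snd z1 = snd z2"
    using assms(1-3) unfolding unit_corners_def by (metis mem_Times_iff prod.collapse)+
  then show False
    using assms(4) by (simp add: prod_eq_iff)
qed

lemma unit_corners_eq_four:
  assumes "z1 \<in> unit_corners" "z2 \<in> unit_corners" "z3 \<in> unit_corners" "z4 \<in> unit_corners"
    and "z1 \<noteq> z2" "z1 \<noteq> z3" "z1 \<noteq> z4" "z2 \<noteq> z3" "z2 \<noteq> z4" "z3 \<noteq> z4"
  shows "unit_corners = {z1, z2, z3, z4}"
proof -
  have "card unit_corners = 4" "card {z1, z2, z3, z4} = 4"
    using assms(5-10) unfolding unit_corners_def by simp_all
  then show ?thesis
    using assms(1-4) by (intro card_subset_eq[symmetric]) (auto simp: unit_corners_def)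
qed

lemma unit_corners_not_subset_three: "\<not> unit_corners \<subseteq> {z1, z2, z3}"
proof
  assume "unit_corners \<subseteq> {z1, z2, z3}"
  then have "card unit_corners \<le> card {z1, z2, z3}"
    by (intro card_mono) auto
  also have "\<dots> \<le> 3"
    by (simp add: card_insert_le_m1)
  finally show False
    unfolding unit_corners_def by simp
qed

lemma nat_step_eq:
  fixes y y' :: real
  assumes "y + real A = y' + real B" "0 \<le> y" "y \<le> 1" "0 \<le> y'" "y' \<le> 1" "A \<noteq> B"
  shows "(y = 1 \<and> y' = 0 \<and> B = A + 1) \<or> (y = 0 \<and> y' = 1 \<and> A = B + 1)"
proof (cases "A < B")
  case True
  then have "real A + 1 \<le> real B" by (metis Suc_leI of_nat_Suc of_nat_le_iff add.commute)
  then show ?thesis using assms by (smt (verit) of_nat_1 of_nat_add of_nat_eq_iff)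
next
  case False
  then have "real B + 1 \<le> real A" using assms(6) by (metis Suc_leI of_nat_Suc of_nat_le_iff add.commute
        linorder_neqE_nat)
  then show ?thesis using assms by (smt (verit) of_nat_1 of_nat_add of_nat_eq_iff)
qed

lemma two_nats_in_unit_interval:
  fixes t :: real
  assumes "a \<noteq> b" "t - 1 \<le> real a" "real a \<le> t" "t - 1 \<le> real b" "real b \<le> t"
  shows "t = real (max a b)"
  using nat_step_eq[of "t - real a" a "t - real b" b] assms by (auto simp: max_def)

lemma unit_square_three_lattice_points:
  fixes t u :: real
  assumes "(a1, b1) \<noteq> (a2, b2)" "(a1, b1) \<noteq> (a3, b3)" "(a2, b2) \<noteq> (a3, b3)"
    and "\<forall>a\<in>{a1, a2, a3}. t - 1 \<le> real a \<and> real a \<le> t"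
    and "\<forall>b\<in>{b1, b2, b3}. u - 1 \<le> real b \<and> real b \<le> u"
  shows "\<exists>n::nat. t = real n"
proof (cases "a1 = a2 \<and> a1 = a3")
  case True
  then have "b1 \<noteq> b2" "b1 \<noteq> b3" "b2 \<noteq> b3" using assms(1-3) by auto
  then have "u = real (max b1 b2)" "u = real (max b2 b3)" "u = real (max b1 b3)"
    using two_nats_in_unit_interval assms(5) by simp_all
  then have "max b1 b2 = max b2 b3" "max b2 b3 = max b1 b3" by linarith+
  then show ?thesis using \<open>b1 \<noteq> b2\<close> \<open>b1 \<noteq> b3\<close> \<open>b2 \<noteq> b3\<close> by (auto simp: max_def split: if_splits)
next
  case False
  then show ?thesis using two_nats_in_unit_interval assms(4) by blast
qed

lemma unit_interval_at_nat:
  fixes t :: real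
  assumes "t = real n" "0 \<le> t - real P" "t - real P \<le> 1"
  shows "t - real P = 0 \<or> t - real P = 1"
proof -
  have "n = P \<or> n = P + 1" using assms by linarith
  then show ?thesis using assms by auto
qed

section \<open>Corner cells\<close>

context connected_gsc
begin

lemma gsc_map_eq_iff:
  "gsc_map N d y = gsc_map N d' y' \<longleftrightarrow>
    fst y + real (fst d) = fst y' + real (fst d') \<and> snd y + real (snd d) = snd y' + real (snd d')"
  using N_pos by (auto simp: gsc_map_def prod_eq_iff divide_cancel_right)

text \<open>For a corner coordinate \<open>r \<in> {0, 1}\<close> of the unit square, \<open>corner_digit r\<close> is the digit of the
  grid cell at that corner and \<open>inner_digit r\<close> the digit of its neighbour in the grid.\<close>

definition corner_digit :: "real \<Rightarrow> nat" where
  "corner_digit r = (if r = 1 then N - 1 else 0)"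

definition inner_digit :: "real \<Rightarrow> nat" where
  "inner_digit r = (if r = 1 then N - 2 else 1)"

definition corner_cell :: "real \<times> real \<Rightarrow> nat \<times> nat" where
  "corner_cell q = (corner_digit (fst q), corner_digit (snd q))"

lemma corner_digit_fixed: "r = 0 \<or> r = 1 \<Longrightarrow> real (corner_digit r) + r = real N * r"
  using N_ge_2 by (auto simp: corner_digit_def of_nat_diff)

lemma inner_digit_shift: "r = 0 \<or> r = 1 \<Longrightarrow> r + real (inner_digit r) = 1 - r + real (corner_digit r)"
  using N_ge_2 by (auto simp: inner_digit_def corner_digit_def of_nat_diff)

lemma inner_digit_not_fixed: "r = 0 \<or> r = 1 \<Longrightarrow> real (inner_digit r) + r \<noteq> real N * r"
  using N_ge_2 by (auto simp: inner_digit_def of_nat_diff)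

lemma corner_digit_cases:
  fixes y y' :: real
  assumes r: "r = 0 \<or> r = 1" and y: "0 \<le> y" "y \<le> 1" "0 \<le> y'" "y' \<le> 1" and d: "d < N"
    and eq: "y + real (corner_digit r) = y' + real d"
  shows "(d = corner_digit r \<and> y = y') \<or> (d = inner_digit r \<and> y = 1 - r \<and> y' = r)"
  using r
proof
  assume r0: "r = 0"
  show ?thesis
  proof (cases "d = 0")
    case False
    then have "real d \<ge> 1" by simp
    then show ?thesis using eq y r0 by (auto simp: corner_digit_def inner_digit_def)
  qed (use eq r0 in \<open>simp add: corner_digit_def\<close>)
next
  assume r1: "r = 1"
  have N1: "real (N - 1) = real N - 1" using N_ge_2 by simp
  show ?thesis
  proof (cases "d = N - 1")
    case False
    then have "real d \<le> real N - 2" using d N_ge_2 by (simp add: of_nat_diff)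
    then have "y = 0" "y' = 1" "real d = real N - 2" using eq y r1 N1 by (simp_all add: corner_digit_def)
    moreover have "d = N - 2" using \<open>real d = real N - 2\<close> N_ge_2 by (simp add: of_nat_diff)
    ultimately show ?thesis using r1 by (simp add: inner_digit_def)
  qed (use eq r1 N1 in \<open>simp add: corner_digit_def\<close>)
qed

lemma corner_cell_mem:
  assumes q: "q \<in> unit_corners" "q \<in> F"
  shows "corner_cell q \<in> D"
proof -
  obtain d y where dy: "d \<in> D" "y \<in> F" "q = gsc_map N d y"
    using q(2) F_self_similar by blast
  have "fst q + real (corner_digit (fst q)) = fst y + real (fst d)"
    "snd q + real (corner_digit (snd q)) = snd y + real (snd d)"
    using dy(3) corner_digit_fixed unit_cornersD[OF q(1)] N_pos
    by (auto simp: gsc_map_def field_simps)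
  then have "fst d = corner_digit (fst q)" "snd d = corner_digit (snd q)"
    using corner_digit_cases[of _ _ "fst y"] corner_digit_cases[of _ _ "snd y"] unit_cornersD[OF q(1)]
      F_unit_square[OF dy(2)] digit_less[OF dy(1)] by (smt (verit))+
  then show ?thesis
    using dy(1) by (metis corner_cell_def prod.collapse)
qed

lemma corner_cell_fixes:
  assumes "q \<in> unit_corners"
  shows "gsc_map N (corner_cell q) q = q"
  using corner_digit_fixed[of "fst q"] corner_digit_fixed[of "snd q"] unit_cornersD[OF assms] N_pos
  by (simp add: gsc_map_def corner_cell_def prod_eq_iff field_simps)

lemma corner_word_fixes:
  assumes "q \<in> unit_corners"
  shows "gsc_word_map N (replicate m (corner_cell q)) q = q"
  by (induction m) (simp_all add: gsc_word_map_Cons corner_cell_fixes[OF assms])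

lemma corner_in_corner_word_cell:
  assumes "q \<in> unit_corners" "q \<in> F"
  shows "q \<in> cell N F (replicate m (corner_cell q))"
  using corner_word_fixes[OF assms(1), of m] assms(2) unfolding cell_def by (metis image_eqI)

lemma corner_word_cell_near:
  assumes q: "q \<in> unit_corners" "q \<in> F" and y: "y \<in> cell N F (replicate m (corner_cell q))"
  shows "\<bar>fst y - fst q\<bar> \<le> 1 / real N ^ m \<and> \<bar>snd y - snd q\<bar> \<le> 1 / real N ^ m"
proof -
  let ?w = "replicate m (corner_cell q)"
  obtain y0 where y0: "y0 \<in> F" "y = gsc_word_map N ?w y0"
    using y by (auto simp: cell_def)
  have "\<bar>fst y0 - fst q\<bar> \<le> 1" "\<bar>snd y0 - snd q\<bar> \<le> 1"
    using F_unit_square[OF y0(1)] F_unit_square[OF q(2)] by auto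
  moreover have "fst y - fst q = (fst y0 - fst q) / real N ^ m" "snd y - snd q = (snd y0 - snd q) / real N ^ m"
    using gsc_word_map_diff[of N ?w y0 q] N_ge_2 corner_word_fixes[OF q(1)] y0(2) by simp_all
  moreover have "\<bar>a / real N ^ m\<bar> \<le> 1 / real N ^ m" if "\<bar>a\<bar> \<le> 1" for a :: real
    using that N_pos by (simp add: abs_divide divide_right_mono)
  ultimately show ?thesis
    by simp
qed

text \<open>A point of the cell of \<open>c ^ m\<close> is close to the corner, so after one more application of the
  corner map \<open>c\<close> it cannot be shared with a cell of another first digit.\<close>

lemma corner_word_cell_meets_only_corner_cell:
  assumes q: "q \<in> unit_corners" "q \<in> F" and m: "m \<ge> 1"
    and y: "y \<in> cell N F (replicate m (corner_cell q))" and y': "y' \<in> F" and d: "d \<in> D"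
    and eq: "gsc_map N (corner_cell q) y = gsc_map N d y'"
  shows "d = corner_cell q"
proof -
  have "real N ^ 1 \<le> real N ^ m"
    using m N_ge_2 by (intro power_increasing) auto
  moreover have "2 \<le> real N"
    using N_ge_2 by simp
  ultimately have "2 \<le> real N ^ m"
    by (metis order_trans power_one_right)
  then have "1 / real N ^ m \<le> 1 / 2"
    using N_ge_2 by (intro divide_left_mono) auto
  then have near: "\<bar>fst y - fst q\<bar> < 1" "\<bar>snd y - snd q\<bar> < 1"
    using corner_word_cell_near[OF q y] by linarith+
  have "set (replicate m (corner_cell q)) \<subseteq> D"
    using corner_cell_mem[OF q] by (simp add: set_replicate_conv_if)
  then have "y \<in> F"
    using y cell_subset by blast
  then have "fst d = corner_digit (fst q)" "snd d = corner_digit (snd q)"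
    using corner_digit_cases[of "fst q" "fst y" "fst y'" "fst d"]
      corner_digit_cases[of "snd q" "snd y" "snd y'" "snd d"]
      eq unit_cornersD[OF q(1)] near F_unit_square[of y] F_unit_square[OF y'] digit_less[OF d]
    unfolding gsc_map_eq_iff by (auto simp: corner_cell_def)
  then show ?thesis
    by (simp add: corner_cell_def prod_eq_iff)
qed

end

section \<open>Removing a corner word from a block\<close>

context connected_gsc
begin

definition off_corner_union :: "real \<times> real \<Rightarrow> (real \<times> real) set" where
  "off_corner_union q = (\<Union>d\<in>D - {corner_cell q}. gsc_map N d ` F)"

definition off_corner_cells :: "real \<times> real \<Rightarrow> nat \<Rightarrow> (real \<times> real) set" where
  "off_corner_cells q m = (\<Union>u\<in>Gamma_vertices D m - {replicate m (corner_cell q)}. cell N F u)"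

lemma off_corner_cells_1: "off_corner_cells q 1 = off_corner_union q"
  unfolding off_corner_cells_def off_corner_union_def
  by (force simp: cell_Cons Gamma_vertices_def length_Suc_conv)

lemma off_corner_cells_Suc:
  assumes "corner_cell q \<in> D"
  shows "off_corner_cells q (Suc m) = off_corner_union q \<union> gsc_map N (corner_cell q) ` off_corner_cells q m"
    (is "?L = ?R")
proof
  show "?L \<subseteq> ?R"
  proof
    fix x assume "x \<in> ?L"
    then obtain w where w: "w \<in> Gamma_vertices D (Suc m)" "w \<noteq> replicate (Suc m) (corner_cell q)"
      "x \<in> cell N F w"
      unfolding off_corner_cells_def by auto
    then obtain d u where du: "w = d # u" "d \<in> D" "u \<in> Gamma_vertices D m"
      by (elim Gamma_vertices_SucE)
    show "x \<in> ?R"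
    proof (cases "d = corner_cell q")
      case True
      then have "cell N F u \<subseteq> off_corner_cells q m"
        using w(2) du unfolding off_corner_cells_def by auto
      then show ?thesis using w(3) du(1) True by (auto simp: cell_Cons)
    next
      case False
      then show ?thesis
        using w(3) du cell_Cons_subset[of u d] unfolding off_corner_union_def
        by (auto simp: Gamma_vertices_def)
    qed
  qed
  show "?R \<subseteq> ?L"
  proof
    fix x assume "x \<in> ?R"
    then show "x \<in> ?L"
    proof
      assume "x \<in> off_corner_union q"
      then obtain d where d: "d \<in> D" "d \<noteq> corner_cell q" "x \<in> gsc_map N d ` F"
        unfolding off_corner_union_def by blast
      then obtain y where "y \<in> F" "x = gsc_map N d y" by blast
      moreover obtain u where "u \<in> Gamma_vertices D m" "y \<in> cell N F u"
        using \<open>y \<in> F\<close> F_eq_cells[of m] by blast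
      ultimately have "u \<in> Gamma_vertices D m" "x \<in> cell N F (d # u)"
        by (auto simp: cell_Cons)
      then show ?thesis
        using d unfolding off_corner_cells_def by (intro UN_I[of "d # u"]) auto
    next
      assume "x \<in> gsc_map N (corner_cell q) ` off_corner_cells q m"
      then obtain u where "u \<in> Gamma_vertices D m" "u \<noteq> replicate m (corner_cell q)"
        "x \<in> cell N F (corner_cell q # u)"
        unfolding off_corner_cells_def by (auto simp: cell_Cons)
      then show ?thesis
        using assms unfolding off_corner_cells_def by (intro UN_I[of "corner_cell q # u"]) auto
    qed
  qed
qed

text \<open>The step of the induction: \<open>F\<close> is connected, so the corner piece meets the other pieces, and
  by \<open>corner_word_cell_meets_only_corner_cell\<close> it does so away from the cell of \<open>c ^ m\<close>.\<close>

lemma connected_off_corner_cells: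
  assumes q: "q \<in> unit_corners" "q \<in> F" and conn: "connected (off_corner_union q)" and "m \<ge> 1"
  shows "connected (off_corner_cells q m)"
  using \<open>m \<ge> 1\<close>
proof (induction m rule: dec_induct)
  case base
  then show ?case using conn off_corner_cells_1[unfolded One_nat_def] by simp
next
  case (step m)
  let ?c = "corner_cell q"
  have c: "?c \<in> D" using corner_cell_mem[OF q] .
  have "D - {?c} \<noteq> {}"
  proof
    assume "D - {?c} = {}"
    then have "card D \<le> card {?c}" by (intro card_mono) auto
    then show False using card_D_ge_2 by simp
  qed
  then have "off_corner_union q \<noteq> {}"
    using F_nonempty unfolding off_corner_union_def by blast
  moreover have "gsc_map N ?c ` F \<noteq> {}" "F = gsc_map N ?c ` F \<union> off_corner_union q"
    using F_nonempty F_self_similar c unfolding off_corner_union_def by blast+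
  moreover have "closed (off_corner_union q)"
    unfolding off_corner_union_def using finite_D by (intro closed_UN) (auto intro: closed_gsc_map_image)
  ultimately have "gsc_map N ?c ` F \<inter> off_corner_union q \<noteq> {}"
    using connected_F_cover_meet closed_gsc_map_image by blast
  then obtain y d y' where y: "y \<in> F" "gsc_map N ?c y \<in> off_corner_union q"
    and dy': "d \<in> D" "d \<noteq> ?c" "y' \<in> F" "gsc_map N ?c y = gsc_map N d y'"
    unfolding off_corner_union_def by blast
  obtain u where u: "u \<in> Gamma_vertices D m" "y \<in> cell N F u"
    using y(1) F_eq_cells[of m] by blast
  have "u \<noteq> replicate m ?c"
    using corner_word_cell_meets_only_corner_cell[OF q step.hyps(1) _ dy'(3,1,4)] u(2) dy'(2) by blast
  then have "y \<in> off_corner_cells q m"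
    using u unfolding off_corner_cells_def by blast
  then have "off_corner_union q \<inter> gsc_map N ?c ` off_corner_cells q m \<noteq> {}"
    using y(2) by blast
  moreover have "connected (gsc_map N ?c ` off_corner_cells q m)"
    by (intro connected_continuous_image continuous_on_gsc_map step.IH)
  ultimately show ?case
    unfolding off_corner_cells_Suc[OF c] using conn connected_Un by blast
qed

lemma graph_connected_block_minus_corner_word:
  assumes q: "q \<in> unit_corners" "q \<in> F" and conn: "connected (off_corner_union q)" and "m \<ge> 1"
  shows "graph_connected ((#) a ` Gamma_vertices D m - {a # replicate m (corner_cell q)}) (Gamma_edge N F)"
proof (rule graph_connected_of_connected_cells)
  show "finite ((#) a ` Gamma_vertices D m - {a # replicate m (corner_cell q)})"
    using finite_Gamma_vertices[OF finite_D] by simp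
  have "(#) a ` Gamma_vertices D m - {a # replicate m (corner_cell q)}
      = (#) a ` (Gamma_vertices D m - {replicate m (corner_cell q)})"
    by auto
  then have "(\<Union>w\<in>(#) a ` Gamma_vertices D m - {a # replicate m (corner_cell q)}. cell N F w)
      = gsc_map N a ` off_corner_cells q m"
    unfolding off_corner_cells_def by (simp add: cell_Cons image_UN)
  moreover have "connected (gsc_map N a ` off_corner_cells q m)"
    using connected_off_corner_cells[OF q conn \<open>m \<ge> 1\<close>]
    by (intro connected_continuous_image continuous_on_gsc_map)
  ultimately show "connected (\<Union>w\<in>(#) a ` Gamma_vertices D m - {a # replicate m (corner_cell q)}. cell N F w)"
    by simp
qed

end

section \<open>Pieces around a corner piece\<close>

context connected_gsc
begin

definition horizontal_neighbour :: "real \<times> real \<Rightarrow> nat \<times> nat" where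
  "horizontal_neighbour q = (inner_digit (fst q), corner_digit (snd q))"

definition vertical_neighbour :: "real \<times> real \<Rightarrow> nat \<times> nat" where
  "vertical_neighbour q = (corner_digit (fst q), inner_digit (snd q))"

definition diagonal_neighbour :: "real \<times> real \<Rightarrow> nat \<times> nat" where
  "diagonal_neighbour q = (inner_digit (fst q), inner_digit (snd q))"

lemma corner_piece_neighbour_cases:
  assumes q: "q \<in> unit_corners" and d: "d \<in> D" "d \<noteq> corner_cell q"
    and meet: "gsc_map N (corner_cell q) ` F \<inter> gsc_map N d ` F \<noteq> {}"
  shows "d = horizontal_neighbour q \<or> d = vertical_neighbour q \<or>
    (d = diagonal_neighbour q \<and> (1 - fst q, 1 - snd q) \<in> F)"
proof -
  obtain y y' where y: "y \<in> F" "y' \<in> F" "gsc_map N (corner_cell q) y = gsc_map N d y'"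
    using meet by blast
  have qc: "fst q = 0 \<or> fst q = 1" "snd q = 0 \<or> snd q = 1"
    using unit_cornersD[OF q] by auto
  have "(fst d = corner_digit (fst q) \<and> fst y = fst y') \<or>
      (fst d = inner_digit (fst q) \<and> fst y = 1 - fst q \<and> fst y' = fst q)"
    "(snd d = corner_digit (snd q) \<and> snd y = snd y') \<or>
      (snd d = inner_digit (snd q) \<and> snd y = 1 - snd q \<and> snd y' = snd q)"
    using corner_digit_cases[OF qc(1)] corner_digit_cases[OF qc(2)] y(3) F_unit_square[OF y(1)]
      F_unit_square[OF y(2)] digit_less[OF d(1)]
    unfolding gsc_map_eq_iff corner_cell_def by auto
  moreover have "\<not> (fst d = corner_digit (fst q) \<and> snd d = corner_digit (snd q))"
    using d(2) by (auto simp: corner_cell_def prod_eq_iff)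
  ultimately show ?thesis
    using y(1) unfolding horizontal_neighbour_def vertical_neighbour_def diagonal_neighbour_def
    by (metis prod.collapse)
qed

lemma horizontal_vertical_neighbours_meet:
  assumes "q \<in> unit_corners" "(fst q, 1 - snd q) \<in> F" "(1 - fst q, snd q) \<in> F"
  shows "gsc_map N (horizontal_neighbour q) ` F \<inter> gsc_map N (vertical_neighbour q) ` F \<noteq> {}"
proof -
  have "gsc_map N (horizontal_neighbour q) (fst q, 1 - snd q) = gsc_map N (vertical_neighbour q) (1 - fst q, snd q)"
    using unit_cornersD[OF assms(1)] inner_digit_shift
    unfolding gsc_map_eq_iff horizontal_neighbour_def vertical_neighbour_def by auto
  then show ?thesis using assms(2,3) by blast
qed

lemma vertical_diagonal_neighbours_meet:
  assumes "q \<in> unit_corners" "(1 - fst q, 1 - snd q) \<in> F" "(fst q, 1 - snd q) \<in> F"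
  shows "gsc_map N (vertical_neighbour q) ` F \<inter> gsc_map N (diagonal_neighbour q) ` F \<noteq> {}"
proof -
  have "gsc_map N (vertical_neighbour q) (1 - fst q, 1 - snd q) = gsc_map N (diagonal_neighbour q) (fst q, 1 - snd q)"
    using unit_cornersD[OF assms(1)] inner_digit_shift
    unfolding gsc_map_eq_iff vertical_neighbour_def diagonal_neighbour_def by auto
  then show ?thesis using assms(2,3) by blast
qed

lemma horizontal_diagonal_neighbours_meet:
  assumes "q \<in> unit_corners" "(1 - fst q, 1 - snd q) \<in> F" "(1 - fst q, snd q) \<in> F"
  shows "gsc_map N (horizontal_neighbour q) ` F \<inter> gsc_map N (diagonal_neighbour q) ` F \<noteq> {}"
proof -
  have "gsc_map N (horizontal_neighbour q) (1 - fst q, 1 - snd q) = gsc_map N (diagonal_neighbour q) (1 - fst q, snd q)"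
    using unit_cornersD[OF assms(1)] inner_digit_shift
    unfolding gsc_map_eq_iff horizontal_neighbour_def diagonal_neighbour_def by auto
  then show ?thesis using assms(2,3) by blast
qed

text \<open>If the horizontal neighbour were a digit, \<open>F\<close> would contain the two points
  \<open>(s, snd q)\<close> and \<open>(s, 1 - snd q)\<close> with \<open>s \<noteq> fst q\<close>: the images of \<open>q\<close> under that neighbour
  and of the opposite corner under the corner cell of \<open>(fst q, 1 - snd q)\<close>.\<close>

lemma horizontal_neighbour_notin_D:
  assumes q: "q \<in> unit_corners" "q \<in> F"
    and unique: "\<forall>s. (s, snd q) \<in> F \<longrightarrow> (s, 1 - snd q) \<in> F \<longrightarrow> s = fst q"
    and F: "(fst q, 1 - snd q) \<in> F" "(1 - fst q, 1 - snd q) \<in> F"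
  shows "horizontal_neighbour q \<notin> D"
proof
  assume hD: "horizontal_neighbour q \<in> D"
  have qc: "fst q = 0 \<or> fst q = 1" "snd q = 0 \<or> snd q = 1"
    using unit_cornersD[OF q(1)] by auto
  have flip: "1 - snd q = 0 \<or> 1 - snd q = 1"
    using qc(2) by auto
  define s where "s = (real (inner_digit (fst q)) + fst q) / real N"
  have "gsc_map N (horizontal_neighbour q) q = (s, snd q)"
    using corner_digit_fixed[OF qc(2)] N_pos by (simp add: gsc_map_def horizontal_neighbour_def s_def field_simps)
  moreover have "gsc_map N (corner_cell (fst q, 1 - snd q)) (1 - fst q, 1 - snd q) = (s, 1 - snd q)"
    using inner_digit_shift[OF qc(1)] corner_digit_fixed[OF flip] N_pos
    by (simp add: gsc_map_def corner_cell_def s_def field_simps)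
  moreover have "corner_cell (fst q, 1 - snd q) \<in> D"
    using corner_cell_mem unit_corners_flip(3)[OF q(1)] F(1) by blast
  ultimately have "(s, snd q) \<in> F" "(s, 1 - snd q) \<in> F"
    using gsc_map_subset hD q(2) F(2) by (metis image_subset_iff)+
  then have "s = fst q"
    using unique by blast
  then have "real (inner_digit (fst q)) + fst q = real N * fst q"
    using N_pos by (simp add: s_def field_simps)
  then show False
    using inner_digit_not_fixed[OF qc(1)] by simp
qed

lemma vertical_neighbour_notin_D:
  assumes q: "q \<in> unit_corners" "q \<in> F"
    and unique: "\<forall>s. (fst q, s) \<in> F \<longrightarrow> (1 - fst q, s) \<in> F \<longrightarrow> s = snd q"
    and F: "(1 - fst q, snd q) \<in> F" "(1 - fst q, 1 - snd q) \<in> F"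
  shows "vertical_neighbour q \<notin> D"
proof
  assume vD: "vertical_neighbour q \<in> D"
  have qc: "fst q = 0 \<or> fst q = 1" "snd q = 0 \<or> snd q = 1"
    using unit_cornersD[OF q(1)] by auto
  have flip: "1 - fst q = 0 \<or> 1 - fst q = 1"
    using qc(1) by auto
  define s where "s = (real (inner_digit (snd q)) + snd q) / real N"
  have "gsc_map N (vertical_neighbour q) q = (fst q, s)"
    using corner_digit_fixed[OF qc(1)] N_pos by (simp add: gsc_map_def vertical_neighbour_def s_def field_simps)
  moreover have "gsc_map N (corner_cell (1 - fst q, snd q)) (1 - fst q, 1 - snd q) = (1 - fst q, s)"
    using inner_digit_shift[OF qc(2)] corner_digit_fixed[OF flip] N_pos
    by (simp add: gsc_map_def corner_cell_def s_def field_simps)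
  moreover have "corner_cell (1 - fst q, snd q) \<in> D"
    using corner_cell_mem unit_corners_flip(2)[OF q(1)] F(1) by blast
  ultimately have "(fst q, s) \<in> F" "(1 - fst q, s) \<in> F"
    using gsc_map_subset vD q(2) F(2) by (metis image_subset_iff)+
  then have "s = snd q"
    using unique by blast
  then have "real (inner_digit (snd q)) + snd q = real N * snd q"
    using N_pos by (simp add: s_def field_simps)
  then show False
    using inner_digit_not_fixed[OF qc(2)] by simp
qed

lemma corner_piece_neighbours_meet:
  assumes q: "q \<in> unit_corners" "q \<in> F"
    and zs: "zs \<in> unit_corners" "zs \<noteq> q" "zs \<notin> F" and others: "\<And>z. z \<in> unit_corners \<Longrightarrow> z \<noteq> zs \<Longrightarrow> z \<in> F"
    and unique_h: "zs = (1 - fst q, snd q) \<Longrightarrow> \<forall>s. (s, snd q) \<in> F \<longrightarrow> (s, 1 - snd q) \<in> F \<longrightarrow> s = fst q"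
    and unique_v: "zs = (fst q, 1 - snd q) \<Longrightarrow> \<forall>s. (fst q, s) \<in> F \<longrightarrow> (1 - fst q, s) \<in> F \<longrightarrow> s = snd q"
    and d: "d1 \<in> D - {corner_cell q}" "d2 \<in> D - {corner_cell q}" "d1 \<noteq> d2"
    and meet: "gsc_map N (corner_cell q) ` F \<inter> gsc_map N d1 ` F \<noteq> {}"
      "gsc_map N (corner_cell q) ` F \<inter> gsc_map N d2 ` F \<noteq> {}"
  shows "gsc_map N d1 ` F \<inter> gsc_map N d2 ` F \<noteq> {}"
proof -
  let ?h = "horizontal_neighbour q" and ?v = "vertical_neighbour q" and ?g = "diagonal_neighbour q"
  have qc: "fst q = 0 \<or> fst q = 1" "snd q = 0 \<or> snd q = 1"
    using unit_cornersD[OF q(1)] by auto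
  have ne: "(1 - fst q, 1 - snd q) \<noteq> (1 - fst q, snd q)" "(1 - fst q, 1 - snd q) \<noteq> (fst q, 1 - snd q)"
    "(1 - fst q, snd q) \<noteq> (fst q, 1 - snd q)"
    using qc by auto
  have d1: "d1 = ?h \<or> d1 = ?v \<or> (d1 = ?g \<and> (1 - fst q, 1 - snd q) \<in> F)"
    and d2: "d2 = ?h \<or> d2 = ?v \<or> (d2 = ?g \<and> (1 - fst q, 1 - snd q) \<in> F)"
    using corner_piece_neighbour_cases[OF q(1) _ _ meet(1)] corner_piece_neighbour_cases[OF q(1) _ _ meet(2)] d
    by blast+
  consider (diagonal) "zs = (1 - fst q, 1 - snd q)" | (horizontal) "zs = (1 - fst q, snd q)"
    | (vertical) "zs = (fst q, 1 - snd q)"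
    using unit_corners_other[OF q(1) zs(1,2)] by blast
  then show ?thesis
  proof cases
    case diagonal
    then have "(1 - fst q, snd q) \<in> F" "(fst q, 1 - snd q) \<in> F"
      using others unit_corners_flip[OF q(1)] ne by auto
    moreover have "{d1, d2} = {?h, ?v}"
      using d1 d2 d(3) zs(3) diagonal by auto
    ultimately show ?thesis
      using horizontal_vertical_neighbours_meet[OF q(1)] by (auto simp: doubleton_eq_iff Int_commute)
  next
    case horizontal
    then have F: "(1 - fst q, 1 - snd q) \<in> F" "(fst q, 1 - snd q) \<in> F"
      using others unit_corners_flip[OF q(1)] ne by auto
    then have "?h \<notin> D"
      using horizontal_neighbour_notin_D[OF q unique_h[OF horizontal]] by blast
    then have "{d1, d2} = {?v, ?g}"
      using d1 d2 d by auto
    then show ?thesis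
      using vertical_diagonal_neighbours_meet[OF q(1) F] by (auto simp: doubleton_eq_iff Int_commute)
  next
    case vertical
    then have F: "(1 - fst q, 1 - snd q) \<in> F" "(1 - fst q, snd q) \<in> F"
      using others unit_corners_flip[OF q(1)] ne by auto
    then have "?v \<notin> D"
      using vertical_neighbour_notin_D[OF q unique_v[OF vertical]] by blast
    then have "{d1, d2} = {?h, ?g}"
      using d1 d2 d by auto
    then show ?thesis
      using horizontal_diagonal_neighbours_meet[OF q(1) F] by (auto simp: doubleton_eq_iff Int_commute)
  qed
qed

lemma graph_connected_pieces: "graph_connected D (\<lambda>d e. d \<noteq> e \<and> gsc_map N d ` F \<inter> gsc_map N e ` F \<noteq> {})"
  using finite_D closed_gsc_map_image F_nonempty connected_F
  by (intro graph_connected_of_connected_UN) (auto simp flip: F_self_similar)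

lemma connected_off_corner_union_if_clique:
  assumes q: "q \<in> unit_corners" "q \<in> F"
    and clique: "\<And>d1 d2. d1 \<in> D - {corner_cell q} \<Longrightarrow> d2 \<in> D - {corner_cell q} \<Longrightarrow> d1 \<noteq> d2 \<Longrightarrow>
      gsc_map N (corner_cell q) ` F \<inter> gsc_map N d1 ` F \<noteq> {} \<Longrightarrow>
      gsc_map N (corner_cell q) ` F \<inter> gsc_map N d2 ` F \<noteq> {} \<Longrightarrow>
      gsc_map N d1 ` F \<inter> gsc_map N d2 ` F \<noteq> {}"
  shows "connected (off_corner_union q)"
  unfolding off_corner_union_def
proof (rule connected_UN_of_graph_connected)
  show "graph_connected (D - {corner_cell q}) (\<lambda>d e. d \<noteq> e \<and> gsc_map N d ` F \<inter> gsc_map N e ` F \<noteq> {})"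
    by (rule graph_connected_Diff_clique[OF graph_connected_pieces corner_cell_mem[OF q]])
      (use clique in \<open>auto simp: Int_commute\<close>)
qed (auto intro: connected_gsc_map_image)

lemma connected_off_corner_union_singleton:
  assumes "D - {corner_cell q} = {d}"
  shows "connected (off_corner_union q)"
  using assms connected_gsc_map_image by (simp add: off_corner_union_def)

end

context connected_gsc
begin

text \<open>If all digits share their first coordinate and two pieces overlap, their second coordinates
  differ by one and the second coordinates of \<open>F\<close> span a unit interval; this forces \<open>N = 2\<close>, and the
  carpet lies on one of the two vertical sides of the unit square.\<close>

lemma fst_corner_if_column:
  assumes D: "D = {a, b}" "fst a = fst b" "a \<noteq> b"
    and y: "y \<in> F" "y' \<in> F" "gsc_map N a y = gsc_map N b y'"
  shows "fst y = 0 \<or> fst y = 1"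
proof -
  have "snd a \<noteq> snd b" using D by (auto simp: prod_eq_iff)
  then have step: "(snd y = 1 \<and> snd y' = 0 \<and> snd b = snd a + 1) \<or> (snd y = 0 \<and> snd y' = 1 \<and> snd a = snd b + 1)"
    using nat_step_eq[of "snd y" "snd a" "snd y'" "snd b"] y F_unit_square[OF y(1)] F_unit_square[OF y(2)]
    unfolding gsc_map_eq_iff by blast
  define lo where "lo = real (min (snd a) (snd b))"
  have "\<forall>d\<in>D. lo \<le> real (snd d) \<and> real (snd d) \<le> lo + 1"
    using step D(1) unfolding lo_def by auto
  then have bound: "lo / (real N - 1) \<le> snd z \<and> snd z \<le> (lo + 1) / (real N - 1)" if "z \<in> F" for z
    using snd_bounds that by blast
  have "1 \<le> (lo + 1) / (real N - 1) - lo / (real N - 1)"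
    using bound[OF y(1)] bound[OF y(2)] step by auto
  then have "1 \<le> 1 / (real N - 1)"
    by (simp add: diff_divide_distrib[symmetric])
  then have N2: "N = 2"
    using N_ge_2 by (simp add: le_divide_eq split: if_splits)
  have "\<forall>d\<in>D. real (fst a) \<le> real (fst d) \<and> real (fst d) \<le> real (fst a)"
    using D by auto
  then have "fst y = real (fst a)"
    using fst_bounds[of "real (fst a)" "real (fst a)" y] y(1) N2 by simp
  moreover have "fst a < 2"
    using digit_less D(1) N2 by auto
  ultimately show ?thesis
    by (auto simp: less_2_cases_iff)
qed

lemma snd_corner_if_row:
  assumes D: "D = {a, b}" "snd a = snd b" "a \<noteq> b"
    and y: "y \<in> F" "y' \<in> F" "gsc_map N a y = gsc_map N b y'"
  shows "snd y = 0 \<or> snd y = 1"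
proof -
  have "fst a \<noteq> fst b" using D by (auto simp: prod_eq_iff)
  then have step: "(fst y = 1 \<and> fst y' = 0 \<and> fst b = fst a + 1) \<or> (fst y = 0 \<and> fst y' = 1 \<and> fst a = fst b + 1)"
    using nat_step_eq[of "fst y" "fst a" "fst y'" "fst b"] y F_unit_square[OF y(1)] F_unit_square[OF y(2)]
    unfolding gsc_map_eq_iff by blast
  define lo where "lo = real (min (fst a) (fst b))"
  have "\<forall>d\<in>D. lo \<le> real (fst d) \<and> real (fst d) \<le> lo + 1"
    using step D(1) unfolding lo_def by auto
  then have bound: "lo / (real N - 1) \<le> fst z \<and> fst z \<le> (lo + 1) / (real N - 1)" if "z \<in> F" for z
    using fst_bounds that by blast
  have "1 \<le> (lo + 1) / (real N - 1) - lo / (real N - 1)"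
    using bound[OF y(1)] bound[OF y(2)] step by auto
  then have "1 \<le> 1 / (real N - 1)"
    by (simp add: diff_divide_distrib[symmetric])
  then have N2: "N = 2"
    using N_ge_2 by (simp add: le_divide_eq split: if_splits)
  have "\<forall>d\<in>D. real (snd a) \<le> real (snd d) \<and> real (snd d) \<le> real (snd a)"
    using D by auto
  then have "snd y = real (snd a)"
    using snd_bounds[of "real (snd a)" "real (snd a)" y] y(1) N2 by simp
  moreover have "snd a < 2"
    using digit_less D(1) N2 by auto
  ultimately show ?thesis
    by (auto simp: less_2_cases_iff)
qed

lemma two_pieces_meet_at_corner:
  assumes D: "D = {a, b}" "a \<noteq> b"
    and y: "y \<in> F" "y' \<in> F" "gsc_map N a y = gsc_map N b y'"
  shows "y \<in> unit_corners"
proof -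
  have "fst y = 0 \<or> fst y = 1"
    using fst_corner_if_column[OF D(1) _ D(2) y] nat_step_eq[of "fst y" "fst a" "fst y'" "fst b"]
      y(3) F_unit_square[OF y(1)] F_unit_square[OF y(2)] unfolding gsc_map_eq_iff by blast
  moreover have "snd y = 0 \<or> snd y = 1"
    using snd_corner_if_row[OF D(1) _ D(2) y] nat_step_eq[of "snd y" "snd a" "snd y'" "snd b"]
      y(3) F_unit_square[OF y(1)] F_unit_square[OF y(2)] unfolding gsc_map_eq_iff by blast
  ultimately show ?thesis
    unfolding unit_corners_def mem_Times_iff by auto
qed

end

section \<open>Fragile carpets\<close>

context connected_gsc
begin

definition words_at :: "real \<times> real \<Rightarrow> (nat \<times> nat) set \<Rightarrow> nat \<Rightarrow> (nat \<times> nat) list set" where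
  "words_at p Z k = {w \<in> Gamma_vertices D k. hd w \<in> Z \<and> p \<in> cell N F w}"

end

locale fragile_gsc = connected_gsc +
  fixes X Y :: "(nat \<times> nat) set" and p :: "real \<times> real"
  assumes partition: "X \<union> Y = D" "X \<inter> Y = {}" "X \<noteq> {}" "Y \<noteq> {}"
    and meet_point: "(\<Union>i\<in>X. gsc_map N i ` F) \<inter> (\<Union>i\<in>Y. gsc_map N i ` F) = {p}"
begin

lemma fragile_gsc_swap: "fragile_gsc N D F Y X p"
  using partition meet_point by unfold_locales auto

lemma cells_across_meet:
  assumes "w \<in> Gamma_vertices D (Suc m)" "w' \<in> Gamma_vertices D (Suc m)" "hd w \<in> X" "hd w' \<in> Y"
  shows "cell N F w \<inter> cell N F w' \<subseteq> {p}"
proof -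
  obtain i u where w: "w = i # u" "u \<in> Gamma_vertices D m"
    using assms(1) by (elim Gamma_vertices_SucE)
  obtain j u' where w': "w' = j # u'" "u' \<in> Gamma_vertices D m"
    using assms(2) by (elim Gamma_vertices_SucE)
  have "cell N F w \<subseteq> gsc_map N i ` F" "cell N F w' \<subseteq> gsc_map N j ` F"
    using cell_Cons_subset w w' by (simp_all add: Gamma_vertices_def)
  moreover have "i \<in> X" "j \<in> Y"
    using assms(3,4) w w' by simp_all
  ultimately have "cell N F w \<subseteq> (\<Union>i\<in>X. gsc_map N i ` F)" "cell N F w' \<subseteq> (\<Union>i\<in>Y. gsc_map N i ` F)"
    by blast+
  then show ?thesis
    using meet_point by blast
qed

lemma words_at_nonempty: "words_at p X (Suc m) \<noteq> {}"
proof -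
  obtain i where i: "i \<in> X" "p \<in> gsc_map N i ` F"
    using meet_point by blast
  then obtain u where "u \<in> Gamma_vertices D m" "p \<in> cell N F (i # u)"
    using cells_of_block[of i m] by blast
  then have "i # u \<in> words_at p X (Suc m)"
    using i partition by (auto simp: words_at_def)
  then show ?thesis by blast
qed

lemma graph_reach_stays_on_side:
  assumes single: "words_at p X (Suc m) = {v}"
    and reach: "graph_reach (Gamma_vertices D (Suc m) - {v}) (Gamma_edge N F) x z" and x: "hd x \<in> X"
  shows "hd z \<in> X"
proof -
  let ?V = "Gamma_vertices D (Suc m) - {v}"
  have "z \<in> {w. hd w \<in> X}"
  proof (rule graph_reach_closed_set[OF reach])
    show "x \<in> {w. hd w \<in> X}" using x by blast
    fix a b assume a: "a \<in> {w. hd w \<in> X}" "a \<in> ?V" and b: "b \<in> ?V" and ab: "Gamma_edge N F a b"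
    show "b \<in> {w. hd w \<in> X}"
    proof (rule ccontr)
      assume "b \<notin> {w. hd w \<in> X}"
      moreover obtain j u where "b = j # u" "j \<in> D"
        using b by (auto elim: Gamma_vertices_SucE)
      ultimately have "hd b \<in> Y" using partition by auto
      then have "p \<in> cell N F a"
        using cells_across_meet[of a m b] a b ab unfolding Gamma_edge_def cell_def by auto
      then have "a \<in> words_at p X (Suc m)"
        using a unfolding words_at_def by auto
      then show False using single a by blast
    qed
  qed
  then show ?thesis by simp
qed

lemma connected_set_on_side:
  assumes m: "m \<ge> 1" and v: "v \<in> Gamma_vertices D (Suc m)" "hd v \<in> X"
    and X_side: "card X \<ge> 2 \<or> graph_connected ((#) (hd v) ` Gamma_vertices D m - {v}) (Gamma_edge N F)"
  obtains W where "W \<subseteq> Gamma_vertices D (Suc m) - {v}" "graph_connected W (Gamma_edge N F)"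
    "card W \<ge> card D ^ m - 1" "W \<noteq> {}" "\<forall>w\<in>W. hd w \<in> X"
proof -
  have "card D ^ 1 \<le> card D ^ m"
    using m card_D_ge_2 by (intro power_increasing) auto
  then have M2: "card D ^ m \<ge> 2" using card_D_ge_2 by simp
  show ?thesis
  proof (cases "card X \<ge> 2")
    case True
    have "\<not> X \<subseteq> {hd v}"
      using True card_mono[of "{hd v}" X] by auto
    then obtain x0 where x0: "x0 \<in> X" "x0 \<noteq> hd v" by blast
    define W where "W = (#) x0 ` Gamma_vertices D m"
    have "W \<subseteq> Gamma_vertices D (Suc m) - {v}" "graph_connected W (Gamma_edge N F)" "card W = card D ^ m"
      "\<forall>w\<in>W. hd w \<in> X"
      using x0 partition graph_connected_block card_block_D unfolding W_def by auto
    moreover have "W \<noteq> {}"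
    proof
      assume "W = {}"
      then have "card W = 0" by simp
      then show False using \<open>card W = card D ^ m\<close> M2 by linarith
    qed
    ultimately show ?thesis
      using that by simp
  next
    case False
    define W where "W = (#) (hd v) ` Gamma_vertices D m - {v}"
    have "card ((#) (hd v) ` Gamma_vertices D m) = card D ^ m"
      by (rule card_block_D)
    then have "card W \<ge> card D ^ m - 1"
      unfolding W_def by (metis card_Diff_singleton_if diff_le_self order_refl)
    moreover have "hd v \<in> D"
      using v(2) partition by blast
    then have "W \<subseteq> Gamma_vertices D (Suc m) - {v}"
      unfolding W_def by auto
    moreover have "graph_connected W (Gamma_edge N F)"
      using X_side False unfolding W_def by simp
    moreover have "\<forall>w\<in>W. hd w \<in> X"
      using v(2) unfolding W_def by auto
    moreover have "W \<noteq> {}"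
      using \<open>card W \<ge> card D ^ m - 1\<close> M2 by (intro notI) simp
    ultimately show ?thesis
      using that by blast
  qed
qed

text \<open>Deleting \<open>v\<close> separates a full block of side \<open>Y\<close> from the connected set of words of side \<open>X\<close>.\<close>

lemma chi_bound_if_separating_word:
  assumes k: "k \<ge> 2" and single: "words_at p X k = {v}"
    and X_side: "card X \<ge> 2 \<or> graph_connected ((#) (hd v) ` Gamma_vertices D (k - 1) - {v}) (Gamma_edge N F)"
  shows "card D ^ (k - 1) - 1 \<le> chi (Gamma_vertices D k) (Gamma_edge N F)"
proof -
  obtain m where km: "k = Suc m" "m \<ge> 1" using k by (cases k) auto
  let ?V = "Gamma_vertices D k"
  have v: "v \<in> ?V" "hd v \<in> X"
    using single unfolding words_at_def by auto
  obtain W where W: "W \<subseteq> ?V - {v}" "graph_connected W (Gamma_edge N F)" "card W \<ge> card D ^ m - 1"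
    "W \<noteq> {}" "\<forall>w\<in>W. hd w \<in> X"
    using connected_set_on_side[OF km(2) v[unfolded km]] X_side km by auto
  obtain y0 where y0: "y0 \<in> Y" using partition by blast
  define B where "B = (#) y0 ` Gamma_vertices D m"
  have B: "B \<subseteq> ?V - {v}" "graph_connected B (Gamma_edge N F)" "card B = card D ^ m" "B \<noteq> {}"
    using y0 partition v(2) graph_connected_block card_block_D Gamma_vertices_nonempty[OF D_nonempty]
    unfolding B_def km by auto
  obtain x1 x2 where x: "x1 \<in> W" "x2 \<in> B" using W(4) B(4) by blast
  have "hd x2 \<notin> X"
    using x(2) y0 partition unfolding B_def by auto
  then have "\<not> graph_reach (?V - {v}) (Gamma_edge N F) x1 x2"
    using graph_reach_stays_on_side[of m v x1 x2] single x(1) W(5) km by auto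
  then have "min (card W) (card B) \<le> chi ?V (Gamma_edge N F)"
    using chi_ge_separated[OF _ _ v(1) W(1) B(1) W(2) B(2) x] finite_Gamma_vertices[OF finite_D]
      graph_connected_Gamma by blast
  then have "card D ^ m - 1 \<le> chi ?V (Gamma_edge N F)"
    using W(3) B(3) by linarith
  then show ?thesis
    using km by simp
qed

abbreviation p_preimage :: "(nat \<times> nat) list \<Rightarrow> real \<times> real" where
  "p_preimage w \<equiv> gsc_word_map_inv N w p"

lemma p_preimage_in_F:
  assumes "p \<in> cell N F w"
  shows "p_preimage w \<in> F"
  using assms gsc_word_map_inv_eq[of N w] N_ge_2 by (auto simp: cell_def)

lemma p_preimage_inj:
  assumes "w \<in> Gamma_vertices D k" "w' \<in> Gamma_vertices D k" "p_preimage w = p_preimage w'"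
  shows "w = w'"
proof (rule word_offset_inj)
  show "word_offset N w = word_offset N w'"
    using assms(1-3) by (auto simp: gsc_word_map_inv_def prod_eq_iff Gamma_vertices_def)
qed (use assms word_grid in \<open>auto simp: Gamma_vertices_def\<close>)

lemma p_preimage_bounds:
  assumes "w \<in> Gamma_vertices D k" "p \<in> cell N F w"
  shows "real N ^ k * fst p - 1 \<le> real (fst (word_offset N w)) \<and> real (fst (word_offset N w)) \<le> real N ^ k * fst p"
    "real N ^ k * snd p - 1 \<le> real (snd (word_offset N w)) \<and> real (snd (word_offset N w)) \<le> real N ^ k * snd p"
  using F_unit_square[OF p_preimage_in_F[OF assms(2)]] assms(1)
  by (auto simp: gsc_word_map_inv_def Gamma_vertices_def)

text \<open>Three cells of level \<open>k\<close> through \<open>p\<close> have distinct grid positions within one unit square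
  around \<open>N ^ k * p\<close>, which forces \<open>N ^ k * p\<close> onto the integer lattice.\<close>

lemma scaled_p_integral:
  assumes w: "w1 \<in> Gamma_vertices D k" "w2 \<in> Gamma_vertices D k" "w3 \<in> Gamma_vertices D k"
    and p: "p \<in> cell N F w1" "p \<in> cell N F w2" "p \<in> cell N F w3"
    and ne: "w1 \<noteq> w2" "w1 \<noteq> w3" "w2 \<noteq> w3"
  shows "(\<exists>n::nat. real N ^ k * fst p = real n) \<and> (\<exists>n::nat. real N ^ k * snd p = real n)"
proof -
  have offset_ne: "word_offset N u \<noteq> word_offset N u'"
    if "u \<in> Gamma_vertices D k" "u' \<in> Gamma_vertices D k" "u \<noteq> u'" for u u'
    using that word_offset_inj[OF _ word_grid[OF that(1)] word_grid[OF that(2)]]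
    by (auto simp: Gamma_vertices_def)
  have "word_offset N w1 \<noteq> word_offset N w2" "word_offset N w1 \<noteq> word_offset N w3"
    "word_offset N w2 \<noteq> word_offset N w3"
    using offset_ne w ne by blast+
  then show ?thesis
    using p_preimage_bounds[OF w(1) p(1)] p_preimage_bounds[OF w(2) p(2)] p_preimage_bounds[OF w(3) p(3)]
      unit_square_three_lattice_points[of "fst (word_offset N w1)" "snd (word_offset N w1)"
        "fst (word_offset N w2)" "snd (word_offset N w2)" "fst (word_offset N w3)" "snd (word_offset N w3)"
        "real N ^ k * fst p" "real N ^ k * snd p"]
      unit_square_three_lattice_points[of "snd (word_offset N w1)" "fst (word_offset N w1)"
        "snd (word_offset N w2)" "fst (word_offset N w2)" "snd (word_offset N w3)" "fst (word_offset N w3)"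
        "real N ^ k * snd p" "real N ^ k * fst p"]
    by (auto simp: prod_eq_iff)
qed

lemma p_preimage_corner:
  assumes "w \<in> Gamma_vertices D k" "p \<in> cell N F w"
    and "(\<exists>n::nat. real N ^ k * fst p = real n) \<and> (\<exists>n::nat. real N ^ k * snd p = real n)"
  shows "p_preimage w \<in> unit_corners"
proof -
  obtain n1 n2 :: nat where n: "real N ^ k * fst p = real n1" "real N ^ k * snd p = real n2"
    using assms(3) by blast
  have "length w = k"
    using assms(1) by (simp add: Gamma_vertices_def)
  then have "fst (p_preimage w) = 0 \<or> fst (p_preimage w) = 1" "snd (p_preimage w) = 0 \<or> snd (p_preimage w) = 1"
    using unit_interval_at_nat[OF n(1)] unit_interval_at_nat[OF n(2)] F_unit_square[OF p_preimage_in_F[OF assms(2)]]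
    by (simp_all add: gsc_word_map_inv_def)
  then show ?thesis
    unfolding unit_corners_def mem_Times_iff by auto
qed

text \<open>The word maps of \<open>v\<close> and \<open>w\<close> send \<open>t\<close> and \<open>t'\<close> to the same point, which lies in both
  cells and hence is \<open>p\<close>.\<close>

lemma shifted_points_eq_p_preimage:
  assumes vw: "v \<in> Gamma_vertices D k" "w \<in> Gamma_vertices D k" "cell N F v \<inter> cell N F w \<subseteq> {p}"
    and t: "t \<in> F" "t' \<in> F"
    and shift: "fst t' - fst t = fst (p_preimage w) - fst (p_preimage v)"
      "snd t' - snd t = snd (p_preimage w) - snd (p_preimage v)"
  shows "t = p_preimage v"
proof -
  have "gsc_word_map N v t = gsc_word_map N w t'"
    using gsc_word_map_shift[OF _ _ shift] N_ge_2 vw(1,2) by (simp add: Gamma_vertices_def)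
  then have "gsc_word_map N v t = p"
    using vw(3) t unfolding cell_def by blast
  then show ?thesis
    using gsc_word_map_inv_eq N_ge_2 by simp
qed

lemma p_preimages_not_axis_neighbours:
  assumes vw: "v \<in> Gamma_vertices D k" "w \<in> Gamma_vertices D k" "cell N F v \<inter> cell N F w \<subseteq> {p}"
    and corners: "p_preimage v \<in> unit_corners" "p_preimage w \<in> unit_corners" "unit_corners \<subseteq> F"
  shows "\<not> axis_neighbours (p_preimage v) (p_preimage w)"
proof
  let ?q = "p_preimage v" and ?q' = "p_preimage w"
  assume "axis_neighbours ?q ?q'"
  then consider "fst ?q \<noteq> fst ?q'" "snd ?q = snd ?q'" | "fst ?q = fst ?q'" "snd ?q \<noteq> snd ?q'"
    unfolding axis_neighbours_def by blast
  then show False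
  proof cases
    case 1
    have "(fst ?q, s) = ?q" if "s \<in> {0, 1}" for s
    proof (rule shifted_points_eq_p_preimage[OF vw])
      show "(fst ?q, s) \<in> F" "(fst ?q', s) \<in> F"
        using corners that unfolding unit_corners_def by auto
    qed (use 1 in simp_all)
    then have "(fst ?q, 0) = ?q" "(fst ?q, 1) = ?q"
      by simp_all
    then show False by (simp add: prod_eq_iff)
  next
    case 2
    have "(s, snd ?q) = ?q" if "s \<in> {0, 1}" for s
    proof (rule shifted_points_eq_p_preimage[OF vw])
      show "(s, snd ?q) \<in> F" "(s, snd ?q') \<in> F"
        using corners that unfolding unit_corners_def by auto
    qed (use 2 in simp_all)
    then have "(0, snd ?q) = ?q" "(1, snd ?q) = ?q"
      by simp_all
    then show False by (simp add: prod_eq_iff)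
  qed
qed

text \<open>Two cells through \<open>p\<close> on each side would put the four preimages of \<open>p\<close> on the four corners of
  the unit square, all in \<open>F\<close>; but a cell of side \<open>Y\<close> then has an axis neighbour on side \<open>X\<close>, and the
  two cells would share a whole side.\<close>

lemma not_two_words_at_each_side:
  assumes "w1 \<in> words_at p X k" "w2 \<in> words_at p X k" "w1 \<noteq> w2"
    and "w3 \<in> words_at p Y k" "w4 \<in> words_at p Y k" "w3 \<noteq> w4" and "k \<ge> 1"
  shows False
proof -
  obtain m where km: "k = Suc m" using \<open>k \<ge> 1\<close> by (cases k) auto
  have V: "w1 \<in> Gamma_vertices D k" "w2 \<in> Gamma_vertices D k" "w3 \<in> Gamma_vertices D k" "w4 \<in> Gamma_vertices D k"
    and P: "p \<in> cell N F w1" "p \<in> cell N F w2" "p \<in> cell N F w3" "p \<in> cell N F w4"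
    and H: "hd w1 \<in> X" "hd w2 \<in> X" "hd w3 \<in> Y" "hd w4 \<in> Y"
    using assms(1,2,4,5) by (auto simp: words_at_def)
  have ne: "w1 \<noteq> w3" "w1 \<noteq> w4" "w2 \<noteq> w3" "w2 \<noteq> w4"
    using H partition(2) by auto
  have C: "p_preimage w1 \<in> unit_corners" "p_preimage w2 \<in> unit_corners"
    "p_preimage w3 \<in> unit_corners" "p_preimage w4 \<in> unit_corners"
    using p_preimage_corner[OF _ _ scaled_p_integral[OF V(1,2,3) P(1,2,3) assms(3) ne(1,3)]] V P by auto
  have dist: "p_preimage w1 \<noteq> p_preimage w2" "p_preimage w1 \<noteq> p_preimage w3" "p_preimage w1 \<noteq> p_preimage w4"
    "p_preimage w2 \<noteq> p_preimage w3" "p_preimage w2 \<noteq> p_preimage w4" "p_preimage w3 \<noteq> p_preimage w4"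
    using p_preimage_inj V assms(3,6) ne by metis+
  have "{p_preimage w1, p_preimage w2, p_preimage w3, p_preimage w4} \<subseteq> F"
    using p_preimage_in_F P by auto
  then have "unit_corners \<subseteq> F"
    using unit_corners_eq_four[OF C dist] by simp
  moreover have "axis_neighbours (p_preimage w1) (p_preimage w3) \<or> axis_neighbours (p_preimage w2) (p_preimage w3)"
    using axis_neighbours_of_two_corners[OF C(1,2,3) dist(1)] dist axis_neighbours_sym by metis
  ultimately show False
    using p_preimages_not_axis_neighbours[OF V(1,3) cells_across_meet[of w1 m w3]]
      p_preimages_not_axis_neighbours[OF V(2,3) cells_across_meet[of w2 m w3]] V H C km by auto
qed

end

context fragile_gsc
begin

lemma gsc_map_meet_eq_p:
  assumes "a \<in> X" "b \<in> Y" "t \<in> F" "t' \<in> F" "gsc_map N a t = gsc_map N b t'"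
  shows "gsc_map N a t = p"
proof -
  have "gsc_map N a t \<in> (\<Union>i\<in>X. gsc_map N i ` F)" "gsc_map N b t' \<in> (\<Union>i\<in>Y. gsc_map N i ` F)"
    using assms(1-4) by blast+
  then show ?thesis
    using meet_point assms(5) by auto
qed

text \<open>Let \<open>p = \<phi>\<^sub>a(y) = \<phi>\<^sub>b(y')\<close>. If \<open>a\<close> and \<open>b\<close> differ in both coordinates, \<open>y\<close> is a corner. If they differ
  in one coordinate only, \<open>\<phi>\<^sub>a(F)\<close> and \<open>\<phi>\<^sub>b(F)\<close> share the images of the two corners on a side of the
  square, and one of the two parallel sides avoids the missing corner \<open>zs\<close>.\<close>

lemma p_on_corner_piece:
  assumes X: "X = {a}" and zs: "zs \<in> unit_corners" "zs \<notin> F"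
    and others: "\<And>z. z \<in> unit_corners \<Longrightarrow> z \<noteq> zs \<Longrightarrow> z \<in> F"
  shows "\<exists>q\<in>unit_corners. q \<in> F \<and> p = gsc_map N a q"
proof -
  obtain b y y' where b: "b \<in> Y" and y: "y \<in> F" "p = gsc_map N a y" and y': "y' \<in> F" "p = gsc_map N b y'"
    using meet_point X by blast
  have ab: "a \<noteq> b" using X b partition(2) by blast
  have e: "fst y + real (fst a) = fst y' + real (fst b)" "snd y + real (snd a) = snd y' + real (snd b)"
    using y(2) y'(2) gsc_map_eq_iff by auto
  have box: "0 \<le> fst y" "fst y \<le> 1" "0 \<le> snd y" "snd y \<le> 1" "0 \<le> fst y'" "fst y' \<le> 1" "0 \<le> snd y'" "snd y' \<le> 1"
    using F_unit_square[OF y(1)] F_unit_square[OF y'(1)] by auto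
  have zs01: "fst zs = 0 \<or> fst zs = 1" "snd zs = 0 \<or> snd zs = 1"
    using unit_cornersD[OF zs(1)] by auto
  consider (both) "fst a \<noteq> fst b" "snd a \<noteq> snd b" | (fst) "fst a \<noteq> fst b" "snd a = snd b"
    | (snd) "fst a = fst b" "snd a \<noteq> snd b"
    using ab by (auto simp: prod_eq_iff)
  then show ?thesis
  proof cases
    case both
    then have "y \<in> unit_corners"
      using nat_step_eq[OF e(1)] nat_step_eq[OF e(2)] box unfolding unit_corners_def mem_Times_iff by auto
    then show ?thesis using y by blast
  next
    case fst
    define s where "s = 1 - snd zs"
    have "(fst y = 1 \<and> fst y' = 0) \<or> (fst y = 0 \<and> fst y' = 1)"
      using nat_step_eq[OF e(1)] box fst by blast
    then have C: "(fst y, s) \<in> unit_corners" "(1 - fst y, s) \<in> unit_corners"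
      "(fst y, s) \<noteq> zs" "(1 - fst y, s) \<noteq> zs" "1 - fst y = fst y'"
      using zs01 unfolding s_def unit_corners_def by (auto simp: prod_eq_iff)
    then have "gsc_map N a (fst y, s) = gsc_map N b (1 - fst y, s)"
      using e fst by (simp add: gsc_map_eq_iff)
    then show ?thesis
      using gsc_map_meet_eq_p[OF _ b] X others C by blast
  next
    case snd
    define s where "s = 1 - fst zs"
    have "(snd y = 1 \<and> snd y' = 0) \<or> (snd y = 0 \<and> snd y' = 1)"
      using nat_step_eq[OF e(2)] box snd by blast
    then have C: "(s, snd y) \<in> unit_corners" "(s, 1 - snd y) \<in> unit_corners"
      "(s, snd y) \<noteq> zs" "(s, 1 - snd y) \<noteq> zs" "1 - snd y = snd y'"
      using zs01 unfolding s_def unit_corners_def by (auto simp: prod_eq_iff)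
    then have "gsc_map N a (s, snd y) = gsc_map N b (s, 1 - snd y)"
      using e snd by (simp add: gsc_map_eq_iff)
    then show ?thesis
      using gsc_map_meet_eq_p[OF _ b] X others C by blast
  qed
qed

lemma corner_word_at_p:
  assumes "q \<in> unit_corners" "q \<in> F" "p = gsc_map N a q" "a \<in> X"
  shows "a # replicate m (corner_cell q) \<in> words_at p X (Suc m)"
  using assms partition corner_cell_mem[OF assms(1,2)] corner_in_corner_word_cell[OF assms(1,2), of m]
  by (auto simp: words_at_def Gamma_vertices_def cell_Cons)

lemma missing_corner:
  assumes v: "v \<in> words_at p X k" and w: "w1 \<in> words_at p Y k" "w2 \<in> words_at p Y k" "w1 \<noteq> w2"
    and "k \<ge> 1"
  shows "\<exists>zs. unit_corners = {p_preimage v, p_preimage w1, p_preimage w2, zs} \<and> zs \<notin> F"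
proof -
  obtain m where km: "k = Suc m" using \<open>k \<ge> 1\<close> by (cases k) auto
  have V: "v \<in> Gamma_vertices D k" "w1 \<in> Gamma_vertices D k" "w2 \<in> Gamma_vertices D k"
    and P: "p \<in> cell N F v" "p \<in> cell N F w1" "p \<in> cell N F w2"
    and H: "hd v \<in> X" "hd w1 \<in> Y" "hd w2 \<in> Y"
    using v w by (auto simp: words_at_def)
  have ne: "v \<noteq> w1" "v \<noteq> w2"
    using H partition(2) by auto
  have C: "p_preimage v \<in> unit_corners" "p_preimage w1 \<in> unit_corners" "p_preimage w2 \<in> unit_corners"
    using p_preimage_corner[OF _ _ scaled_p_integral[OF V P ne w(3)]] V P by auto
  have dist: "p_preimage v \<noteq> p_preimage w1" "p_preimage v \<noteq> p_preimage w2" "p_preimage w1 \<noteq> p_preimage w2"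
    using p_preimage_inj V ne w(3) by metis+
  obtain zs where zs: "zs \<in> unit_corners" "zs \<notin> {p_preimage v, p_preimage w1, p_preimage w2}"
    using unit_corners_not_subset_three by blast
  then have cover: "unit_corners = {p_preimage v, p_preimage w1, p_preimage w2, zs}"
    using unit_corners_eq_four[OF C zs(1)] dist by auto
  have "zs \<notin> F"
  proof
    assume "zs \<in> F"
    then have "{p_preimage v, p_preimage w1, p_preimage w2, zs} \<subseteq> F"
      using p_preimage_in_F P by auto
    then have "unit_corners \<subseteq> F"
      using cover by simp
    moreover have "axis_neighbours (p_preimage v) (p_preimage w1) \<or> axis_neighbours (p_preimage v) (p_preimage w2)"
      using axis_neighbours_of_two_corners[OF C(2,3,1) dist(3)] dist by metis
    ultimately show False
      using p_preimages_not_axis_neighbours[OF V(1,2) cells_across_meet[of v m w1]]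
        p_preimages_not_axis_neighbours[OF V(1,3) cells_across_meet[of v m w2]] V H C km by auto
  qed
  then show ?thesis using cover by blast
qed

lemma single_word_at_corner:
  assumes X: "X = {a}" and single: "words_at p X (Suc m) = {v}"
    and q: "q \<in> unit_corners" "q \<in> F" "p = gsc_map N a q"
  shows "v = a # replicate m (corner_cell q)" "p_preimage v = q"
proof -
  have "a # replicate m (corner_cell q) \<in> words_at p X (Suc m)"
    using corner_word_at_p[OF q, of m] X by simp
  then show v: "v = a # replicate m (corner_cell q)"
    using single by simp
  have "gsc_word_map N v q = p"
    unfolding v using q(3) corner_word_fixes[OF q(1)] by (simp add: gsc_word_map_Cons)
  then show "p_preimage v = q"
    using gsc_word_map_inv_eq N_ge_2 by simp
qed

lemma p_preimages_vertical_pair: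
  assumes v: "v \<in> words_at p X (Suc m)" "p_preimage v = q"
    and w: "w \<in> words_at p Y (Suc m)" "p_preimage w = (fst q, 1 - snd q)"
  shows "\<forall>s. (s, snd q) \<in> F \<longrightarrow> (s, 1 - snd q) \<in> F \<longrightarrow> s = fst q"
proof (intro allI impI)
  fix s assume "(s, snd q) \<in> F" "(s, 1 - snd q) \<in> F"
  then have "(s, snd q) = q"
    using shifted_points_eq_p_preimage[OF _ _ cells_across_meet[of v m w]] v w
    by (auto simp: words_at_def)
  then show "s = fst q" by (simp add: prod_eq_iff)
qed

lemma p_preimages_horizontal_pair:
  assumes v: "v \<in> words_at p X (Suc m)" "p_preimage v = q"
    and w: "w \<in> words_at p Y (Suc m)" "p_preimage w = (1 - fst q, snd q)"
  shows "\<forall>s. (fst q, s) \<in> F \<longrightarrow> (1 - fst q, s) \<in> F \<longrightarrow> s = snd q"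
proof (intro allI impI)
  fix s assume "(fst q, s) \<in> F" "(1 - fst q, s) \<in> F"
  then have "(fst q, s) = q"
    using shifted_points_eq_p_preimage[OF _ _ cells_across_meet[of v m w]] v w
    by (auto simp: words_at_def)
  then show "s = snd q" by (simp add: prod_eq_iff)
qed

text \<open>The preimages of \<open>p\<close> under \<open>v\<close>, \<open>w1\<close>, \<open>w2\<close> are three corners, the missing one \<open>zs\<close> is not in
  \<open>F\<close>, and the preimage \<open>q\<close> for \<open>v\<close> is also the corner with \<open>p = \<phi>\<^sub>a(q)\<close>. Whichever axis neighbour of
  \<open>q\<close> differs from \<open>zs\<close> is the preimage for a word of side \<open>Y\<close>; this gives the uniqueness hypotheses of
  \<open>corner_piece_neighbours_meet\<close>.\<close>

lemma corner_of_p_if_two_words_at_Y: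
  assumes k: "k \<ge> 2" and X: "X = {a}" and single: "words_at p X k = {v}"
    and w: "w1 \<in> words_at p Y k" "w2 \<in> words_at p Y k" "w1 \<noteq> w2"
  shows "\<exists>q\<in>unit_corners. q \<in> F \<and> p = gsc_map N a q \<and> connected (off_corner_union q)"
proof -
  obtain m where km: "k = Suc m" using k by (cases k) auto
  have v: "v \<in> words_at p X k" using single by blast
  obtain zs where cover: "unit_corners = {p_preimage v, p_preimage w1, p_preimage w2, zs}" and zsF: "zs \<notin> F"
    using missing_corner[OF v w] k by auto
  have P: "p \<in> cell N F v" "p \<in> cell N F w1" "p \<in> cell N F w2"
    using v w by (auto simp: words_at_def)
  have others: "z \<in> F" if "z \<in> unit_corners" "z \<noteq> zs" for z
  proof -
    have "z \<in> {p_preimage v, p_preimage w1, p_preimage w2}"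
      using that cover by blast
    then show ?thesis
      using p_preimage_in_F P by blast
  qed
  obtain q where q: "q \<in> unit_corners" "q \<in> F" "p = gsc_map N a q"
    using p_on_corner_piece[OF X _ zsF others] cover by blast
  have vq: "p_preimage v = q"
    using single_word_at_corner[OF X single[unfolded km] q] by simp
  have qc: "fst q = 0 \<or> fst q = 1" "snd q = 0 \<or> snd q = 1"
    using unit_cornersD[OF q(1)] by auto
  have Y_preimage: "\<exists>w\<in>{w1, w2}. p_preimage w = z" if "z \<in> unit_corners" "z \<noteq> zs" "z \<noteq> q" for z
  proof -
    have "z = p_preimage w1 \<or> z = p_preimage w2"
      using that cover vq by auto
    then show ?thesis by blast
  qed
  have unique_h: "\<forall>s. (s, snd q) \<in> F \<longrightarrow> (s, 1 - snd q) \<in> F \<longrightarrow> s = fst q"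
    if "zs = (1 - fst q, snd q)"
  proof -
    have "(fst q, 1 - snd q) \<noteq> zs" "(fst q, 1 - snd q) \<noteq> q"
      using that qc by (auto simp: prod_eq_iff)
    then obtain w where "w \<in> {w1, w2}" "p_preimage w = (fst q, 1 - snd q)"
      using Y_preimage[OF unit_corners_flip(3)[OF q(1)]] by blast
    then show ?thesis
      using p_preimages_vertical_pair[of v m q w] v vq w km by auto
  qed
  have unique_v: "\<forall>s. (fst q, s) \<in> F \<longrightarrow> (1 - fst q, s) \<in> F \<longrightarrow> s = snd q"
    if "zs = (fst q, 1 - snd q)"
  proof -
    have "(1 - fst q, snd q) \<noteq> zs" "(1 - fst q, snd q) \<noteq> q"
      using that qc by (auto simp: prod_eq_iff)
    then obtain w where "w \<in> {w1, w2}" "p_preimage w = (1 - fst q, snd q)"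
      using Y_preimage[OF unit_corners_flip(2)[OF q(1)]] by blast
    then show ?thesis
      using p_preimages_horizontal_pair[of v m q w] v vq w km by auto
  qed
  have "zs \<in> unit_corners" "zs \<noteq> q"
    using cover zsF q(2) by auto
  then have "connected (off_corner_union q)"
    using connected_off_corner_union_if_clique[OF q(1,2)]
      corner_piece_neighbours_meet[OF q(1,2) _ _ zsF others unique_h unique_v] by blast
  then show ?thesis
    using q by blast
qed

lemma corner_of_p_if_two_pieces:
  assumes X: "X = {a}" and Y: "Y = {b}"
  shows "\<exists>q\<in>unit_corners. q \<in> F \<and> p = gsc_map N a q \<and> connected (off_corner_union q)"
proof -
  have D: "D = {a, b}" "a \<noteq> b" using partition X Y by auto
  obtain y y' where y: "y \<in> F" "p = gsc_map N a y" "y' \<in> F" "p = gsc_map N b y'"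
    using meet_point X Y by blast
  then have "y \<in> unit_corners"
    using two_pieces_meet_at_corner[OF D] by metis
  moreover have "corner_cell y = a \<or> corner_cell y = b"
    using corner_cell_mem[OF \<open>y \<in> unit_corners\<close> y(1)] D(1) by simp
  then have "D - {corner_cell y} = {b} \<or> D - {corner_cell y} = {a}"
    using D by blast
  ultimately show ?thesis
    using y connected_off_corner_union_singleton by blast
qed

lemma chi_bound_at_corner:
  assumes k: "k \<ge> 2" and single: "words_at p X k = {v}" and X: "X = {a}"
    and q: "q \<in> unit_corners" "q \<in> F" "p = gsc_map N a q" and conn: "connected (off_corner_union q)"
  shows "card D ^ (k - 1) - 1 \<le> chi (Gamma_vertices D k) (Gamma_edge N F)"
proof -
  obtain m where km: "k = Suc m" "m \<ge> 1" using k by (cases k) auto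
  have "v = a # replicate m (corner_cell q)"
    using single_word_at_corner[OF X single[unfolded km(1)] q] by simp
  then show ?thesis
    using chi_bound_if_separating_word[OF k single] graph_connected_block_minus_corner_word[OF q(1,2) conn km(2)] km(1)
    by simp
qed

lemma chi_bound_if_single_word_at:
  assumes k: "k \<ge> 2" and single: "words_at p X k = {v}"
  shows "card D ^ (k - 1) - 1 \<le> chi (Gamma_vertices D k) (Gamma_edge N F)"
proof (cases "card X \<ge> 2")
  case True
  then show ?thesis using chi_bound_if_separating_word[OF k single] by blast
next
  case False
  have singleton: "\<exists>c. Z = {c}" if "Z \<subseteq> D" "Z \<noteq> {}" "\<not> card Z \<ge> 2" for Z
  proof -
    have "card Z \<noteq> 0"
      using that(2) finite_subset[OF that(1) finite_D] by simp
    then have "card Z = 1"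
      using that(3) by linarith
    then show ?thesis by (rule card_1_singletonE) blast
  qed
  obtain a where X: "X = {a}"
    using singleton[of X] False partition by blast
  have "words_at p Y k \<noteq> {}"
    using fragile_gsc.words_at_nonempty[OF fragile_gsc_swap, of "k - 1"] k by (simp add: Suc_diff_1)
  then consider w1 w2 where "w1 \<in> words_at p Y k" "w2 \<in> words_at p Y k" "w1 \<noteq> w2"
    | w where "words_at p Y k = {w}"
    by (metis is_singletonI' is_singleton_def)
  then show ?thesis
  proof cases
    case 1
    then show ?thesis
      using corner_of_p_if_two_words_at_Y[OF k X single] chi_bound_at_corner[OF k single X] by blast
  next
    case 2
    show ?thesis
    proof (cases "card Y \<ge> 2")
      case True
      then show ?thesis
        using fragile_gsc.chi_bound_if_separating_word[OF fragile_gsc_swap k 2] by blast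
    next
      case False
      then obtain b where "Y = {b}"
        using singleton[of Y] partition by blast
      then show ?thesis
        using corner_of_p_if_two_pieces[OF X] chi_bound_at_corner[OF k single X] by blast
    qed
  qed
qed

lemma chi_bound:
  assumes k: "k \<ge> 2"
  shows "card D ^ (k - 1) - 1 \<le> chi (Gamma_vertices D k) (Gamma_edge N F)"
proof -
  have "words_at p X k \<noteq> {}" "words_at p Y k \<noteq> {}"
    using words_at_nonempty[of "k - 1"] fragile_gsc.words_at_nonempty[OF fragile_gsc_swap, of "k - 1"] k
    by (simp_all add: Suc_diff_1)
  moreover have "\<not> (\<not> is_singleton (words_at p X k) \<and> \<not> is_singleton (words_at p Y k))"
  proof
    assume "\<not> is_singleton (words_at p X k) \<and> \<not> is_singleton (words_at p Y k)"
    with \<open>words_at p X k \<noteq> {}\<close> \<open>words_at p Y k \<noteq> {}\<close> obtain w1 w2 w3 w4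
      where "w1 \<in> words_at p X k" "w2 \<in> words_at p X k" "w1 \<noteq> w2"
        "w3 \<in> words_at p Y k" "w4 \<in> words_at p Y k" "w3 \<noteq> w4"
      by (meson is_singletonI')
    then show False
      by (rule not_two_words_at_each_side) (use k in simp)
  qed
  ultimately show ?thesis
    using chi_bound_if_single_word_at[OF k] fragile_gsc.chi_bound_if_single_word_at[OF fragile_gsc_swap k]
    unfolding is_singleton_def by blast
qed

end

theorem mainTheorem10:
  fixes N :: nat and D :: "(nat \<times> nat) set" and F :: "(real \<times> real) set" and k :: nat
  assumes "gsc_params N D"
    and "gsc_attractor N D F"
    and "connected F"
    and "fragile N D F"
    and "k \<ge> 2"
  shows "int (chi (Gamma_vertices D k) (Gamma_edge N F)) \<ge> int (card D) ^ (k - 1) - 1"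
proof -
  obtain X Y p where "fragile_gsc N D F X Y p"
    using assms(1-4) unfolding fragile_def fragile_gsc_def fragile_gsc_axioms_def connected_gsc_def by blast
  then have "card D ^ (k - 1) - 1 \<le> chi (Gamma_vertices D k) (Gamma_edge N F)"
    using fragile_gsc.chi_bound assms(5) by blast
  moreover have "card D ^ (k - 1) \<ge> 1"
    using assms(1) by (simp add: gsc_params_def)
  then have "int (card D ^ (k - 1) - 1) = int (card D) ^ (k - 1) - 1"
    by (simp add: of_nat_diff)
  ultimately show ?thesis
    by linarith
qed

end
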